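(* For every $\omega\ge6$, the Swirl Network with source dimension $\omega$ is scalar linearly solvable over $\mathrm{GF}(5)$ and over $\mathrm{GF}(7)$, but does not have a vector linear solution over $\mathrm{GF}(2)^L$ for any $L\in\{1,2,3\}$.
   Context: A multicast network is a finite directed acyclic multigraph with a unique source $s$ and a set of receivers; edges have unit capacity; $In(v)$, $Out(v)$ are incoming/outgoing edges of $v$; $\omega=|Out(s)|$ is the source dimension. A vector linear code over $\mathrm{GF}(q)^L$ assigns to each pair $(d,e)$ of edges an $L\times L$ matrix $\mathbf{K}_{d,e}$ over $\mathrm{GF}(q)$, zero unless $d\in In(v)$, $e\in Out(v)$ for some $v$; global encoding kernels ($\omega L\times L$) satisfy $[\mathbf{F}_e]_{e\in Out(s)}=\mathbf{I}_{\omega L}$ and $\mathbf{F}_e=\sum_{d\in In(v)}\mathbf{F}_d\mathbf{K}_{d,e}$ for $e\in Out(v)$, $v\neq s$; it is a solution if $[\mathbf{F}_e]_{e\in In(t)}$ has rank $\omega L$ for every receiver $t$. Scalar linear solutions over $\mathrm{GF}(Q)$ are the dimension-$1$ case. The Swirl Network with source dimension $\omega$ has source $s$; nodes $u_1,\dots,u_\omega$ each with one edge from $s$; nodes $v_1,\dots,v_\omega$, where $v_j$ has one incoming edge from $u_j$ and one from $u_{j+1}$ ($u_{\omega+1}=u_1$); each $v_j$ has $2$ outgoing edges, each to a distinct layer-4 node (each layer-4 node has exactly one incoming edge); and for every set $N$ of $\omega$ layer-4 nodes such that there are $\omega$ edge-disjoint paths from $s$ ending at nodes of $N$, a receiver with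 one incoming edge from each node of $N$. *)

theory Defs
  imports "Jordan_Normal_Form.DL_Rank"
begin

definition In_edges :: "'e set \<Rightarrow> ('e \<Rightarrow> 'v) \<Rightarrow> 'v \<Rightarrow> 'e set" where
  "In_edges E head v = {e \<in> E. head e = v}"

definition Out_edges :: "'e set \<Rightarrow> ('e \<Rightarrow> 'v) \<Rightarrow> 'v \<Rightarrow> 'e set" where
  "Out_edges E tail v = {e \<in> E. tail e = v}"

definition block_concat :: "nat \<Rightarrow> ('e \<Rightarrow> 'a mat) \<Rightarrow> 'e list \<Rightarrow> 'a mat" where
  "block_concat n F es = mat_of_cols n (concat (map (\<lambda>e. cols (F e)) es))"

definition is_vector_linear_solution ::
  "'e set \<Rightarrow> ('e \<Rightarrow> 'v) \<Rightarrow> ('e \<Rightarrow> 'v) \<Rightarrow> 'v \<Rightarrow> 'v set \<Rightarrow> nat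
    \<Rightarrow> ('e \<Rightarrow> 'e \<Rightarrow> 'a::field mat) \<Rightarrow> ('e \<Rightarrow> 'a mat) \<Rightarrow> bool" where
  "is_vector_linear_solution E tail head s Rcv L K F \<longleftrightarrow>
     (let \<omega> = card (Out_edges E tail s) in
       (\<forall>d\<in>E. \<forall>e\<in>E. K d e \<in> carrier_mat L L \<and> (head d \<noteq> tail e \<longrightarrow> K d e = 0\<^sub>m L L)) \<and>
       (\<forall>e\<in>E. F e \<in> carrier_mat (\<omega> * L) L) \<and>
       (\<exists>srcs. distinct srcs \<and> set srcs = Out_edges E tail s \<and>
           block_concat (\<omega> * L) F srcs = 1\<^sub>m (\<omega> * L)) \<and>
       (\<forall>e\<in>E. tail e \<noteq> s \<longrightarrow>
           F e = mat (\<omega> * L) L (\<lambda>(i, j). \<Sum>d\<in>In_edges E head (tail e). (F d * K d e) $$ (i, j))) \<and>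
       (\<forall>t\<in>Rcv. \<exists>es. distinct es \<and> set es = In_edges E head t \<and>
           vec_space.rank (\<omega> * L) (block_concat (\<omega> * L) F es) = \<omega> * L))"

text \<open>Existence of a vector linear solution over GF(q)^L, the field being the type 'a.
  Scalar linear solvability is the case L = 1.\<close>
definition vector_linear_solvable ::
  "'a::field itself \<Rightarrow> 'e set \<Rightarrow> ('e \<Rightarrow> 'v) \<Rightarrow> ('e \<Rightarrow> 'v) \<Rightarrow> 'v \<Rightarrow> 'v set \<Rightarrow> nat \<Rightarrow> bool" where
  "vector_linear_solvable _ E tail head s Rcv L \<longleftrightarrow>
     (\<exists>(K :: 'e \<Rightarrow> 'e \<Rightarrow> 'a mat) F. is_vector_linear_solution E tail head s Rcv L K F)"

text \<open>Nodes: source, u_j, v_j (j < omega, 0-based, indices mod omega),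
  layer-4 nodes W j b (the two out-neighbours of v_j), and receivers R N,
  indexed by the set N of layer-4 nodes (encoded as pairs (j,b)).
  The Swirl network has no parallel edges, so edges are pairs (tail, head).\<close>

datatype snode = Src | NU nat | NV nat | NW nat bool | NR "(nat \<times> bool) set"

definition swirl_base_edges :: "nat \<Rightarrow> (snode \<times> snode) set" where
  "swirl_base_edges \<omega> =
     {(Src, NU j) | j. j < \<omega>} \<union>
     {(NU j, NV j) | j. j < \<omega>} \<union>
     {(NU (Suc j mod \<omega>), NV j) | j. j < \<omega>} \<union>
     {(NV j, NW j b) | j b. j < \<omega>}"

definition swirl_src_path :: "nat \<Rightarrow> (snode \<times> snode) list \<Rightarrow> bool" where
  "swirl_src_path \<omega> p \<longleftrightarrow> p \<noteq> [] \<and> set p \<subseteq> swirl_base_edges \<omega> \<and> fst (hd p) = Src \<and>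
     (\<forall>i. Suc i < length p \<longrightarrow> snd (p ! i) = fst (p ! Suc i))"

definition swirl_receiver_sets :: "nat \<Rightarrow> (nat \<times> bool) set set" where
  "swirl_receiver_sets \<omega> =
     {N. N \<subseteq> {(j, b). j < \<omega>} \<and> card N = \<omega> \<and>
         (\<exists>P :: nat \<Rightarrow> (snode \<times> snode) list.
            (\<forall>i<\<omega>. swirl_src_path \<omega> (P i) \<and> snd (last (P i)) \<in> (\<lambda>(j, b). NW j b) ` N) \<and>
            (\<forall>i<\<omega>. \<forall>k<\<omega>. i \<noteq> k \<longrightarrow> set (P i) \<inter> set (P k) = {}))}"

definition swirl_edges :: "nat \<Rightarrow> (snode \<times> snode) set" where
  "swirl_edges \<omega> = swirl_base_edges \<omega> \<union>
     {(NW j b, NR N) | j b N. N \<in> swirl_receiver_sets \<omega> \<and> (j, b) \<in> N}"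

definition swirl_receivers :: "nat \<Rightarrow> snode set" where
  "swirl_receivers \<omega> = NR ` swirl_receiver_sets \<omega>"

definition swirl_vl_solvable :: "'a::field itself \<Rightarrow> nat \<Rightarrow> nat \<Rightarrow> bool" where
  "swirl_vl_solvable ty \<omega> L =
     vector_linear_solvable ty (swirl_edges \<omega>) fst snd Src (swirl_receivers \<omega>) L"

end

theory Submission
  imports Defs "HOL-Number_Theory.Residues" "Berlekamp_Zassenhaus.Berlekamp_Type_Based"
begin

(* A receiver of the Swirl network routes the path through the source edge to u_a via
   v_(t a), with t a = a or a - 1 (mod w), to a layer-4 node (t a, b_a), the nodes (t a, b_a)
   being distinct.

   Scalar code: the out-edges of v_j towards (j, b) carry e_j + r(j, b) e_(j+1) with
   r(j, b) = +-1 for j > 0 and +-2 for j = 0.  A vector orthogonal to the columns of a receiver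
   satisfies one relation per a.  Where two paths merge at v_j both coefficients r(j, _) occur,
   which forces zeros that propagate around the cycle; if no paths merge, the relations go
   once around the cycle and multiply to +-2, which is not 1 when 2 and 3 are nonzero.

   GF(2)^L: the rank conditions at suitable receivers make the transfer matrices A(j, b),
   C(j, b) from the source blocks of u_j and u_(j+1) to the edge into (j, b) injective, and
   the maps f(j, b) x = x A(j, b) C(j, b)^-1 additive and injective with
   f(j, 0) x <> f(j, 1) x for x <> 0.  For L <= 3 no proper set S of at most three nonzero
   vectors has f(j, 0) S = f(j, 1) S, so the sets reachable forwards and backwards grow
   until they contain 4 or all 2^L - 1 nonzero vectors.  For w >= 6 this yields a closed
   walk x_(j+1) = f(j, b_j) x_j of nonzero vectors, i.e. a nonzero vector orthogonal to the
   columns of the receiver {(j, b_j)}. *)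

section \<open>Shape of the Swirl network\<close>

lemma Suc_mod_if: "j < w \<Longrightarrow> Suc j mod w = (if Suc j = w then 0 else Suc j)"
  by auto

lemma Suc_mod_inj: "x < w \<Longrightarrow> y < w \<Longrightarrow> Suc x mod w = Suc y mod w \<Longrightarrow> x = y"
  by (simp add: Suc_mod_if split: if_splits)

lemma swirl_base_edges_iff:
  "e \<in> swirl_base_edges w \<longleftrightarrow>
    (\<exists>a<w. e = (Src, NU a)) \<or> (\<exists>j<w. e = (NU j, NV j)) \<or> (\<exists>j<w. e = (NU (Suc j mod w), NV j)) \<or>
    (\<exists>j b. j < w \<and> e = (NV j, NW j b))"
  unfolding swirl_base_edges_def by blast

lemma swirl_edges_iff:
  "e \<in> swirl_edges w \<longleftrightarrow>
    (\<exists>a<w. e = (Src, NU a)) \<or> (\<exists>j<w. e = (NU j, NV j)) \<or> (\<exists>j<w. e = (NU (Suc j mod w), NV j)) \<or>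
    (\<exists>j b. j < w \<and> e = (NV j, NW j b)) \<or>
    (\<exists>j b N. N \<in> swirl_receiver_sets w \<and> (j, b) \<in> N \<and> e = (NW j b, NR N))"
  unfolding swirl_edges_def swirl_base_edges_def by blast

lemma swirl_receiver_set_bound: "N \<in> swirl_receiver_sets w \<Longrightarrow> (j, b) \<in> N \<Longrightarrow> j < w"
  unfolding swirl_receiver_sets_def by auto

lemma card_swirl_receiver_set: "N \<in> swirl_receiver_sets w \<Longrightarrow> card N = w"
  unfolding swirl_receiver_sets_def by auto

text \<open>A receiver set is described by a routing: the path through the source edge to \<open>u\<^sub>a\<close>
  continues to \<open>v\<^bsub>t a\<^esub>\<close>, where \<open>t a\<close> is \<open>a\<close> or \<open>a - 1\<close> (mod \<open>w\<close>),
  and ends at the layer-4 node \<open>(t a, bs a)\<close>.\<close>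
definition swirl_routing :: "nat \<Rightarrow> (nat \<Rightarrow> nat) \<Rightarrow> (nat \<Rightarrow> bool) \<Rightarrow> bool" where
  "swirl_routing w t bs \<longleftrightarrow> (\<forall>a<w. t a < w \<and> (t a = a \<or> Suc (t a) mod w = a)) \<and>
     inj_on (\<lambda>a. (t a, bs a)) {..<w}"

lemma swirl_src_path_to_layer4:
  assumes "swirl_src_path w p" "snd (last p) = NW j0 b0"
  obtains a j b where "a < w" "j < w" "a = j \<or> a = Suc j mod w"
    "p = [(Src, NU a), (NU a, NV j), (NV j, NW j b)]"
proof -
  have ne: "p \<noteq> []" and sub: "set p \<subseteq> swirl_base_edges w" and hd: "fst (hd p) = Src"
    and link: "\<And>i. Suc i < length p \<Longrightarrow> snd (p ! i) = fst (p ! Suc i)"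
    using assms(1) unfolding swirl_src_path_def by auto
  obtain e0 r0 where p: "p = e0 # r0" using ne by (cases p) auto
  have "e0 \<in> swirl_base_edges w" using sub p by auto
  then obtain a where a: "a < w" "e0 = (Src, NU a)"
    using hd p unfolding swirl_base_edges_iff by auto
  obtain e1 r1 where r0: "r0 = e1 # r1" using assms(2) p a by (cases r0) auto
  have "snd e0 = fst e1" using link[of 0] p r0 by auto
  moreover have "e1 \<in> swirl_base_edges w" using sub p r0 by auto
  ultimately obtain j where j: "j < w" "e1 = (NU a, NV j)" "a = j \<or> a = Suc j mod w"
    using a unfolding swirl_base_edges_iff by auto
  obtain e2 r2 where r1: "r1 = e2 # r2" using assms(2) p r0 j by (cases r1) auto
  have "snd e1 = fst e2" using link[of 1] p r0 r1 by auto
  moreover have "e2 \<in> swirl_base_edges w" using sub p r0 r1 by auto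
  ultimately obtain b where b: "e2 = (NV j, NW j b)"
    using j unfolding swirl_base_edges_iff by auto
  have "r2 = []"
  proof (rule ccontr)
    assume "r2 \<noteq> []"
    then obtain e3 r3 where r2: "r2 = e3 # r3" by (cases r2) auto
    have "snd e2 = fst e3" using link[of 2] p r0 r1 r2 by auto
    moreover have "e3 \<in> swirl_base_edges w" using sub p r0 r1 r2 by auto
    ultimately show False using b unfolding swirl_base_edges_iff by auto
  qed
  then show thesis using that p r0 r1 a j b by simp
qed

lemma swirl_receiver_setI:
  assumes "swirl_routing w t bs"
  shows "(\<lambda>a. (t a, bs a)) ` {..<w} \<in> swirl_receiver_sets w"
proof -
  have t: "\<forall>a<w. t a < w \<and> (t a = a \<or> Suc (t a) mod w = a)"
    and inj: "inj_on (\<lambda>a. (t a, bs a)) {..<w}"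
    using assms unfolding swirl_routing_def by auto
  define P where "P a = [(Src, NU a), (NU a, NV (t a)), (NV (t a), NW (t a) (bs a))]" for a
  have "swirl_src_path w (P a)" if "a < w" for a
  proof -
    have "(NU a, NV (t a)) \<in> swirl_base_edges w"
      using t that unfolding swirl_base_edges_iff by metis
    moreover have "(Src, NU a) \<in> swirl_base_edges w" "(NV (t a), NW (t a) (bs a)) \<in> swirl_base_edges w"
      using t that unfolding swirl_base_edges_iff by auto
    ultimately show ?thesis unfolding swirl_src_path_def P_def
      by (auto simp: less_Suc_eq nth_Cons split: nat.splits)
  qed
  moreover have "set (P a) \<inter> set (P c) = {}" if "a < w" "c < w" "a \<noteq> c" for a c
  proof -
    have "(t a, bs a) \<noteq> (t c, bs c)" using inj_onD[OF inj, of a c] that by auto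
    then show ?thesis using that unfolding P_def by auto
  qed
  moreover have "card ((\<lambda>a. (t a, bs a)) ` {..<w}) = w"
    using card_image[OF inj] by simp
  moreover have "snd (last (P a)) \<in> (\<lambda>(j, b). NW j b) ` (\<lambda>a. (t a, bs a)) ` {..<w}" if "a < w" for a
    using that unfolding P_def by auto
  moreover have "(\<lambda>a. (t a, bs a)) ` {..<w} \<subseteq> {(j, b). j < w}"
    using t by auto
  ultimately show ?thesis
    unfolding swirl_receiver_sets_def by blast
qed

text \<open>Edge-disjointness makes the map from paths to their source edges \<open>(s, u\<^sub>a)\<close> a bijection,
  so the paths can be re-indexed by \<open>a\<close>.\<close>
lemma swirl_receiver_setE:
  assumes N: "N \<in> swirl_receiver_sets w" and w: "0 < w"
  obtains t bs where "swirl_routing w t bs" "N = (\<lambda>a. (t a, bs a)) ` {..<w}"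
proof -
  from N obtain P where cardN: "card N = w"
    and path: "\<forall>i<w. swirl_src_path w (P i) \<and> snd (last (P i)) \<in> (\<lambda>(j, b). NW j b) ` N"
    and disj: "\<forall>i<w. \<forall>k<w. i \<noteq> k \<longrightarrow> set (P i) \<inter> set (P k) = {}"
    unfolding swirl_receiver_sets_def by blast
  have "\<exists>a j b. a < w \<and> j < w \<and> (a = j \<or> a = Suc j mod w) \<and>
          P i = [(Src, NU a), (NU a, NV j), (NV j, NW j b)]" if i: "i < w" for i
  proof -
    obtain j0 b0 where "snd (last (P i)) = NW j0 b0" using path i by auto
    then show ?thesis using swirl_src_path_to_layer4 path i by metis
  qed
  then obtain au tv bv where sh: "\<And>i. i < w \<Longrightarrow> au i < w \<and> tv i < w \<and>
      (au i = tv i \<or> au i = Suc (tv i) mod w) \<and>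
      P i = [(Src, NU (au i)), (NU (au i), NV (tv i)), (NV (tv i), NW (tv i) (bv i))]"
    by metis
  have inj_au: "inj_on au {..<w}"
    by (rule inj_onI) (use sh disj in fastforce)
  have inj_tb: "inj_on (\<lambda>i. (tv i, bv i)) {..<w}"
    by (rule inj_onI) (use sh disj in fastforce)
  have bij_au: "bij_betw au {..<w} {..<w}"
    using inj_au endo_inj_surj[OF finite_lessThan _ inj_au] sh by (auto simp: bij_betw_def)
  have img: "(\<lambda>i. (tv i, bv i)) ` {..<w} \<subseteq> N"
    using path sh by fastforce
  have finN: "finite N" using cardN w card.infinite by fastforce
  have N_eq: "(\<lambda>i. (tv i, bv i)) ` {..<w} = N"
    by (rule card_subset_eq[OF finN img]) (simp add: card_image[OF inj_tb] cardN)
  define ia where "ia = inv_into {..<w} au"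
  have ia: "ia a < w" "au (ia a) = a" if "a < w" for a
    using bij_au that unfolding ia_def bij_betw_def by (metis f_inv_into_f inv_into_into lessThan_iff)+
  have ia_img: "ia ` {..<w} = {..<w}"
    using bij_betw_inv_into[OF bij_au] unfolding ia_def bij_betw_def by simp
  define t where "t a = tv (ia a)" for a
  define bs where "bs a = bv (ia a)" for a
  have "(\<lambda>a. (t a, bs a)) ` {..<w} = (\<lambda>i. (tv i, bv i)) ` ia ` {..<w}"
    unfolding t_def bs_def by (simp add: image_image)
  then have N_t: "N = (\<lambda>a. (t a, bs a)) ` {..<w}"
    using ia_img N_eq by simp
  have "inj_on (\<lambda>a. (t a, bs a)) {..<w}"
    using eq_card_imp_inj_on[of "{..<w}"] N_t cardN by (metis card_lessThan finite_lessThan)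
  moreover have "\<forall>a<w. t a < w \<and> (t a = a \<or> Suc (t a) mod w = a)"
    using ia sh unfolding t_def by metis
  ultimately show thesis using that N_t unfolding swirl_routing_def by blast
qed

lemma In_edges_NU: "a < w \<Longrightarrow> In_edges (swirl_edges w) snd (NU a) = {(Src, NU a)}"
  unfolding In_edges_def swirl_edges_iff by auto

lemma In_edges_NV:
  "j < w \<Longrightarrow> In_edges (swirl_edges w) snd (NV j) = {(NU j, NV j), (NU (Suc j mod w), NV j)}"
  unfolding In_edges_def swirl_edges_iff by auto

lemma In_edges_NW: "j < w \<Longrightarrow> In_edges (swirl_edges w) snd (NW j b) = {(NV j, NW j b)}"
  unfolding In_edges_def swirl_edges_iff by auto

lemma In_edges_NR:
  "N \<in> swirl_receiver_sets w \<Longrightarrow> In_edges (swirl_edges w) snd (NR N) = (\<lambda>(j, b). (NW j b, NR N)) ` N"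
  unfolding In_edges_def swirl_edges_iff by auto

lemma card_In_edges_NR: "N \<in> swirl_receiver_sets w \<Longrightarrow> card (In_edges (swirl_edges w) snd (NR N)) = w"
  by (subst In_edges_NR, assumption, subst card_image) (auto simp: inj_on_def card_swirl_receiver_set)

lemma Out_edges_Src: "Out_edges (swirl_edges w) fst Src = (\<lambda>a. (Src, NU a)) ` {..<w}"
  unfolding Out_edges_def swirl_edges_iff by auto

lemma card_Out_edges_Src: "card (Out_edges (swirl_edges w) fst Src) = w"
  unfolding Out_edges_Src by (subst card_image) (auto simp: inj_on_def)

section \<open>Block concatenation and full rank\<close>

lemma length_concat_cols:
  "\<forall>e\<in>set es. F e \<in> carrier_mat n L \<Longrightarrow> length (concat (map (\<lambda>e. cols (F e)) es)) = length es * L"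
  by (induction es) auto

lemma block_concat_carrier:
  "\<forall>e\<in>set es. F e \<in> carrier_mat n L \<Longrightarrow> block_concat n F es \<in> carrier_mat n (length es * L)"
  unfolding block_concat_def using length_concat_cols[of es F n L] by (metis mat_of_cols_carrier(1))

lemma set_cols_block_concat:
  "\<forall>e\<in>set es. F e \<in> carrier_mat n L \<Longrightarrow>
     set (cols (block_concat n F es)) = (\<Union>e\<in>set es. set (cols (F e)))"
  unfolding block_concat_def by (subst cols_mat_of_cols) (auto dest!: subsetD[OF cols_dim])

lemma nth_concat_cols:
  "\<forall>e\<in>set es. F e \<in> carrier_mat n L \<Longrightarrow> t < length es \<Longrightarrow> k < L \<Longrightarrow>
     concat (map (\<lambda>e. cols (F e)) es) ! (t * L + k) = col (F (es ! t)) k"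
proof (induction es arbitrary: t)
  case (Cons e es)
  then have "F e \<in> carrier_mat n L" by auto
  with Cons show ?case by (cases t) (auto simp: nth_append)
qed simp

lemma block_index_less:
  assumes "p < w" "k < L" shows "p * L + k < w * (L::nat)"
proof -
  have "p * L + k < Suc p * L" using assms(2) by simp
  also have "\<dots> \<le> w * L" using assms(1) by (intro mult_le_mono1) simp
  finally show ?thesis .
qed

lemma block_concat_index:
  assumes "\<forall>e\<in>set es. F e \<in> carrier_mat n L" "t < length es" "k < L" "i < n"
  shows "block_concat n F es $$ (i, t * L + k) = F (es ! t) $$ (i, k)"
proof -
  have "F (es ! t) \<in> carrier_mat n L" using assms(1,2) nth_mem by blast
  then have "col (F (es ! t)) k $ i = F (es ! t) $$ (i, k)" using assms(3,4) by simp
  then show ?thesis unfolding block_concat_def using assms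
    by (subst mat_of_cols_index) (auto simp: length_concat_cols nth_concat_cols block_index_less)
qed

lemma rank_eq_dim_iff_orthogonal:
  fixes M :: "'a::field mat"
  assumes M: "M \<in> carrier_mat n n"
  shows "vec_space.rank n M = n \<longleftrightarrow>
     (\<forall>\<phi>\<in>carrier_vec n. (\<forall>c\<in>set (cols M). c \<bullet> \<phi> = 0) \<longrightarrow> \<phi> = 0\<^sub>v n)"
proof -
  have kernel: "transpose_mat M *\<^sub>v v = 0\<^sub>v n \<longleftrightarrow> (\<forall>c\<in>set (cols M). c \<bullet> v = 0)"
    if "v \<in> carrier_vec n" for v
    using M that by (auto simp: cols_def vec_eq_iff)
  have "vec_space.rank n M = n \<longleftrightarrow> det (transpose_mat M) \<noteq> 0"
    using vec_space.det_rank_iff[OF M] det_transpose[OF M] by simp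
  also have "\<dots> \<longleftrightarrow> \<not> (\<exists>v. v \<in> carrier_vec n \<and> v \<noteq> 0\<^sub>v n \<and> transpose_mat M *\<^sub>v v = 0\<^sub>v n)"
    using det_0_iff_vec_prod_zero_field[of "transpose_mat M" n] M by simp
  finally show ?thesis using kernel by blast
qed

section \<open>Scalar linear solutions when \<open>2 \<noteq> 0\<close> and \<open>3 \<noteq> 0\<close>\<close>

lemma cyclic_propagation:
  assumes "a0 < w" "P a0" and step: "\<And>a. a < w \<Longrightarrow> P a \<Longrightarrow> P (Suc a mod w)" and "a < w"
  shows "P a"
proof -
  have "P ((a0 + k) mod w)" for k
  proof (induction k)
    case (Suc k)
    then show ?case using step[of "(a0 + k) mod w"] assms(1) by (simp add: mod_Suc_eq)
  qed (use assms in simp)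
  from this[of "a + w - a0"] show ?thesis using assms(1,4) by simp
qed

lemma cyclic_recurrence_zero:
  fixes \<psi> c :: "nat \<Rightarrow> 'a::field"
  assumes rec: "\<And>j. j < w \<Longrightarrow> \<psi> j = c j * \<psi> (Suc j mod w)"
    and c_nz: "\<And>j. j < w \<Longrightarrow> c j \<noteq> 0" and prod: "(\<Prod>j<w. c j) \<noteq> 1" and "a < w"
  shows "\<psi> a = 0"
proof -
  have unroll: "\<psi> 0 = (\<Prod>j<k. c j) * \<psi> (k mod w)" if "k \<le> w" for k
    using that
  proof (induction k)
    case (Suc k)
    then have "\<psi> (k mod w) = c k * \<psi> (Suc k mod w)" using rec[of k] by simp
    with Suc show ?case by (simp add: mult.assoc)
  qed simp
  have "(1 - (\<Prod>j<w. c j)) * \<psi> 0 = 0"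
    using unroll[of w] by (simp add: algebra_simps)
  then have "\<psi> 0 = 0" using prod by simp
  moreover have "\<psi> (Suc j mod w) = 0" if "j < w" "\<psi> j = 0" for j
    using rec[of j] c_nz[of j] that by simp
  ultimately show ?thesis
    using cyclic_propagation[of 0 w "\<lambda>j. \<psi> j = 0" a] \<open>a < w\<close> by simp
qed

text \<open>The coding coefficient of the edge \<open>u\<^bsub>j+1\<^esub> \<rightarrow> v\<^sub>j\<close> towards the layer-4 node
  \<open>(j, b)\<close>; the edge \<open>u\<^sub>j \<rightarrow> v\<^sub>j\<close> always has coefficient 1.  Going once around the
  cycle multiplies by \<open>\<plusminus>2\<close>, which differs from 1 as soon as \<open>3 \<noteq> 0\<close>.\<close>
definition swirl_coeff :: "nat \<Rightarrow> bool \<Rightarrow> 'a::field" where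
  "swirl_coeff j b = (if j = 0 then 2 else 1) * (if b then 1 else -1)"

lemma swirl_coeff_nonzero: "(2::'a::field) \<noteq> 0 \<Longrightarrow> (swirl_coeff j b :: 'a) \<noteq> 0"
  by (simp add: swirl_coeff_def)

lemma swirl_coeff_distinct: "(2::'a::field) \<noteq> 0 \<Longrightarrow> (swirl_coeff j True :: 'a) \<noteq> swirl_coeff j False"
  by (simp add: swirl_coeff_def eq_neg_iff_add_eq_0 flip: mult_2)

lemma swirl_coeff_cycle_zero:
  fixes \<psi> :: "nat \<Rightarrow> 'a::field"
  assumes two: "(2::'a) \<noteq> 0" and three: "(3::'a) \<noteq> 0" and w: "0 < w"
    and eqs: "\<forall>j<w. \<exists>b. \<psi> j + swirl_coeff j b * \<psi> (Suc j mod w) = 0" and "a < w"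
  shows "\<psi> a = 0"
proof -
  obtain bs where bs: "\<And>j. j < w \<Longrightarrow> \<psi> j + swirl_coeff j (bs j) * \<psi> (Suc j mod w) = 0"
    using eqs by metis
  define c where "c j = - (swirl_coeff j (bs j) :: 'a)" for j
  have "(\<Prod>j<k. c j) = 2 \<or> (\<Prod>j<k. c j) = -2" if "0 < k" for k
    using that
  proof (induction k)
    case (Suc k)
    then show ?case by (cases "k = 0") (auto simp: c_def swirl_coeff_def)
  qed simp
  moreover have "(2::'a) \<noteq> 1"
    by (metis add_cancel_right_right one_add_one zero_neq_one)
  moreover have "(-2::'a) \<noteq> 1"
    using three by (metis eq_neg_iff_add_eq_0 numeral_One numeral_plus_numeral semiring_norm(3))
  ultimately have prod: "(\<Prod>j<w. c j) \<noteq> 1" using w by metis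
  have rec: "\<psi> j = c j * \<psi> (Suc j mod w)" if "j < w" for j
    using bs[OF that] by (simp add: c_def eq_neg_iff_add_eq_0)
  have "c j \<noteq> 0" for j
    using swirl_coeff_nonzero[OF two] by (simp add: c_def)
  with rec prod show ?thesis
    using cyclic_recurrence_zero[of w \<psi> c a] assms(5) by blast
qed

context
  fixes w :: nat and t :: "nat \<Rightarrow> nat" and bs :: "nat \<Rightarrow> bool"
    and r :: "nat \<Rightarrow> bool \<Rightarrow> 'a::field" and \<phi> :: "nat \<Rightarrow> 'a"
  assumes w: "3 \<le> w" and routing: "swirl_routing w t bs"
    and r_nz: "\<And>j b. r j b \<noteq> 0" and r_distinct: "\<And>j. r j True \<noteq> r j False"
    and eqs: "\<And>a. a < w \<Longrightarrow> \<phi> (t a) + r (t a) (bs a) * \<phi> (Suc (t a) mod w) = 0"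
begin

lemma routed_eq_straight: "a < w \<Longrightarrow> t a = a \<Longrightarrow> \<phi> a + r a (bs a) * \<phi> (Suc a mod w) = 0"
  using eqs[of a] by simp

lemma routed_eq_turn:
  assumes "a < w" "t a \<noteq> a" "p < w" "Suc p mod w = a"
  shows "\<phi> p + r p (bs a) * \<phi> a = 0"
proof -
  have "t a < w" "Suc (t a) mod w = a" using routing assms(1,2) unfolding swirl_routing_def by auto
  then have "t a = p" using Suc_mod_inj assms(3,4) by metis
  then show ?thesis using eqs[OF assms(1)] assms(4) by simp
qed

text \<open>Where two paths meet at \<open>v\<^sub>a\<close> the receiver sees both out-edges of \<open>v\<^sub>a\<close>, whose
  coefficients differ.\<close>
lemma routed_merge_zero:
  assumes a: "a < w" "t a = a" and s: "t (Suc a mod w) \<noteq> Suc a mod w"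
  shows "\<phi> a = 0"
proof -
  let ?s = "Suc a mod w"
  have "?s < w" using a(1) by simp
  then have "t ?s < w" "Suc (t ?s) mod w = ?s"
    using routing s unfolding swirl_routing_def by auto
  then have "t ?s = a" using Suc_mod_inj a(1) by blast
  moreover have "a \<noteq> ?s" using a w by (simp add: Suc_mod_if)
  ultimately have "bs a \<noteq> bs ?s"
    using inj_onD[of "\<lambda>a. (t a, bs a)" "{..<w}" a ?s] routing a unfolding swirl_routing_def by auto
  then have r_ne: "r a (bs a) - r a (bs ?s) \<noteq> 0"
    using r_distinct[of a] by (cases "bs a"; cases "bs ?s") auto
  have e1: "\<phi> a + r a (bs a) * \<phi> ?s = 0" using routed_eq_straight a by blast
  have e2: "\<phi> a + r a (bs ?s) * \<phi> ?s = 0" using eqs[of ?s] \<open>t ?s = a\<close> a(1) by simp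
  have "(r a (bs a) - r a (bs ?s)) * \<phi> ?s = (\<phi> a + r a (bs a) * \<phi> ?s) - (\<phi> a + r a (bs ?s) * \<phi> ?s)"
    by (simp add: algebra_simps)
  then have "(r a (bs a) - r a (bs ?s)) * \<phi> ?s = 0" using e1 e2 by simp
  with r_ne e1 show ?thesis by simp
qed

lemma routed_straight_zero:
  assumes turn: "\<exists>c<w. t c \<noteq> c" and a: "a < w" "t a = a"
  shows "\<phi> a = 0"
proof (rule ccontr)
  assume "\<phi> a \<noteq> 0"
  have "t c = c \<and> \<phi> c \<noteq> 0" if "c < w" for c
  proof (rule cyclic_propagation[where P = "\<lambda>c. t c = c \<and> \<phi> c \<noteq> 0", OF a(1) _ _ that])
    show "t a = a \<and> \<phi> a \<noteq> 0" using a \<open>\<phi> a \<noteq> 0\<close> by simp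
    fix c assume c: "c < w" "t c = c \<and> \<phi> c \<noteq> 0"
    then have "t (Suc c mod w) = Suc c mod w" using routed_merge_zero by blast
    moreover have "\<phi> (Suc c mod w) \<noteq> 0" using routed_eq_straight c by force
    ultimately show "t (Suc c mod w) = Suc c mod w \<and> \<phi> (Suc c mod w) \<noteq> 0" ..
  qed
  with turn show False by blast
qed

lemma routed_system_zero:
  assumes cycle: "\<And>\<psi> j. \<forall>j<w. \<exists>b. \<psi> j + r j b * \<psi> (Suc j mod w) = 0 \<Longrightarrow> j < w \<Longrightarrow> \<psi> j = 0"
    and a: "a < w"
  shows "\<phi> a = 0"
proof (cases "\<forall>c<w. t c = c")
  case True
  then show ?thesis using cycle routed_eq_straight a by blast
next
  case turn: False
  show ?thesis
  proof (cases "\<forall>c<w. t c \<noteq> c")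
    case True
    have "\<phi> j + r j (bs (Suc j mod w)) * \<phi> (Suc j mod w) = 0" if "j < w" for j
      using routed_eq_turn[of "Suc j mod w" j] True that w by simp
    then show ?thesis using cycle a by blast
  next
    case False
    then obtain x where x: "x < w" "t x = x" by blast
    have "\<phi> (Suc c mod w) = 0" if "c < w" "\<phi> c = 0" for c
    proof (cases "t (Suc c mod w) = Suc c mod w")
      case True
      then show ?thesis using routed_straight_zero turn that(1) by simp
    next
      case False
      then show ?thesis using routed_eq_turn[of "Suc c mod w" c] that r_nz by simp
    qed
    then show ?thesis
      using cyclic_propagation[of x w "\<lambda>c. \<phi> c = 0" a] routed_straight_zero turn x a by blast
  qed
qed

end

definition swirl_col :: "nat \<Rightarrow> nat \<Rightarrow> bool \<Rightarrow> nat \<Rightarrow> 'a::field" where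
  "swirl_col w j b i = of_bool (i = j) + of_bool (i = Suc j mod w) * swirl_coeff j b"

fun swirl_global_kernel :: "nat \<Rightarrow> snode \<Rightarrow> snode \<Rightarrow> nat \<Rightarrow> 'a::field" where
  "swirl_global_kernel w Src (NU a) i = of_bool (i = a)"
| "swirl_global_kernel w (NU a) _ i = of_bool (i = a)"
| "swirl_global_kernel w (NV j) (NW _ b) i = swirl_col w j b i"
| "swirl_global_kernel w (NW j b) _ i = swirl_col w j b i"
| "swirl_global_kernel w _ _ i = 0"

fun swirl_local_kernel :: "nat \<Rightarrow> snode \<Rightarrow> snode \<Rightarrow> snode \<Rightarrow> 'a::field" where
  "swirl_local_kernel w (NU a) (NV j) (NW _ b) = (if a = j then 1 else swirl_coeff j b)"
| "swirl_local_kernel w _ _ _ = 1"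

definition swirl_scalar_F :: "nat \<Rightarrow> snode \<times> snode \<Rightarrow> 'a::field mat" where
  "swirl_scalar_F w e = mat w 1 (\<lambda>(i, _). swirl_global_kernel w (fst e) (snd e) i)"

definition swirl_scalar_K :: "nat \<Rightarrow> snode \<times> snode \<Rightarrow> snode \<times> snode \<Rightarrow> 'a::field mat" where
  "swirl_scalar_K w d e = mat 1 1 (\<lambda>_. if snd d = fst e then swirl_local_kernel w (fst d) (snd d) (snd e) else 0)"

lemma sum_swirl_col:
  fixes f :: "nat \<Rightarrow> 'a::field"
  assumes "j < w"
  shows "(\<Sum>i<w. swirl_col w j b i * f i) = f j + swirl_coeff j b * f (Suc j mod w)"
proof -
  have "(\<Sum>i<w. swirl_col w j b i * f i) =
      (\<Sum>i<w. if i = j then f j else 0) + (\<Sum>i<w. if i = Suc j mod w then swirl_coeff j b * f i else 0)"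
    unfolding swirl_col_def sum.distrib[symmetric] by (rule sum.cong) (auto simp: distrib_right)
  also have "\<dots> = f j + swirl_coeff j b * f (Suc j mod w)"
    using assms by (simp only: sum.delta finite_lessThan) simp
  finally show ?thesis .
qed

lemma swirl_global_kernel_recursion:
  assumes e: "e \<in> swirl_edges w" and "fst e \<noteq> Src" and w: "2 \<le> w"
  shows "swirl_global_kernel w (fst e) (snd e) i = (\<Sum>d\<in>In_edges (swirl_edges w) snd (fst e).
           swirl_global_kernel w (fst d) (snd d) i * (swirl_local_kernel w (fst d) (snd d) (snd e) :: 'a::field))"
proof -
  from assms consider
      (u) j where "j < w" "e = (NU j, NV j) \<or> e = (NU (Suc j mod w), NV j)"
    | (v) j b where "j < w" "e = (NV j, NW j b)"
    | (r) j b N where "N \<in> swirl_receiver_sets w" "(j, b) \<in> N" "e = (NW j b, NR N)"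
    unfolding swirl_edges_iff by auto
  then show ?thesis
  proof cases
    case v
    then have "Suc j mod w \<noteq> j" using w by (simp add: Suc_mod_if)
    with v show ?thesis by (simp add: In_edges_NV swirl_col_def)
  next
    case r
    then show ?thesis using swirl_receiver_set_bound by (simp add: In_edges_NW)
  qed (auto simp: In_edges_NU)
qed

lemma swirl_scalar_F_recursion:
  assumes "e \<in> swirl_edges w" "fst e \<noteq> Src" "2 \<le> w"
  shows "(swirl_scalar_F w e :: 'a::field mat) = mat (w * 1) 1 (\<lambda>(i, j).
           \<Sum>d\<in>In_edges (swirl_edges w) snd (fst e). (swirl_scalar_F w d * swirl_scalar_K w d e) $$ (i, j))"
proof (rule eq_matI)
  fix i j assume "i < dim_row (mat (w * 1) 1 (\<lambda>(i, j).
      \<Sum>d\<in>In_edges (swirl_edges w) snd (fst e). (swirl_scalar_F w d * swirl_scalar_K w d e :: 'a mat) $$ (i, j)))"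
    "j < dim_col (mat (w * 1) 1 (\<lambda>(i, j).
      \<Sum>d\<in>In_edges (swirl_edges w) snd (fst e). (swirl_scalar_F w d * swirl_scalar_K w d e :: 'a mat) $$ (i, j)))"
  then have "i < w" "j = 0" by auto
  then show "swirl_scalar_F w e $$ (i, j) = mat (w * 1) 1 (\<lambda>(i, j).
      \<Sum>d\<in>In_edges (swirl_edges w) snd (fst e). (swirl_scalar_F w d * swirl_scalar_K w d e :: 'a mat) $$ (i, j)) $$ (i, j)"
    using swirl_global_kernel_recursion[OF assms]
    by (auto simp: swirl_scalar_F_def swirl_scalar_K_def scalar_prod_def In_edges_def intro!: sum.cong)
qed (auto simp: swirl_scalar_F_def)

lemma col_swirl_scalar_F_NW_scalar_prod:
  assumes "j < w" and "\<phi> \<in> carrier_vec w"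
  shows "col (swirl_scalar_F w (NW j b, x) :: 'a::field mat) 0 \<bullet> \<phi> = \<phi> $ j + swirl_coeff j b * \<phi> $ (Suc j mod w)"
proof -
  have "col (swirl_scalar_F w (NW j b, x) :: 'a mat) 0 \<bullet> \<phi> = (\<Sum>i<w. swirl_col w j b i * \<phi> $ i)"
    using assms(2) by (simp add: scalar_prod_def swirl_scalar_F_def lessThan_atLeast0)
  then show ?thesis using sum_swirl_col[OF assms(1)] by simp
qed

lemma swirl_coeff_routed_system_zero:
  fixes \<phi> :: "nat \<Rightarrow> 'a::field"
  assumes two: "(2::'a) \<noteq> 0" and three: "(3::'a) \<noteq> 0" and w: "3 \<le> w"
    and routing: "swirl_routing w t bs"
    and eqs: "\<And>a. a < w \<Longrightarrow> \<phi> (t a) + swirl_coeff (t a) (bs a) * \<phi> (Suc (t a) mod w) = 0"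
    and "a < w"
  shows "\<phi> a = 0"
proof (rule routed_system_zero[OF w routing _ _ eqs _ \<open>a < w\<close>])
  show "\<And>j b. (swirl_coeff j b :: 'a) \<noteq> 0" "\<And>j. (swirl_coeff j True :: 'a) \<noteq> swirl_coeff j False"
    using swirl_coeff_nonzero[OF two] swirl_coeff_distinct[OF two] by auto
  show "\<psi> j = 0" if "\<forall>j<w. \<exists>b. \<psi> j + swirl_coeff j b * \<psi> (Suc j mod w) = 0" "j < w"
    for \<psi> :: "nat \<Rightarrow> 'a" and j
    using swirl_coeff_cycle_zero[OF two three _ that] w by simp
qed

lemma swirl_scalar_F_full_rank:
  assumes N: "N \<in> swirl_receiver_sets w" and w: "3 \<le> w"
    and two: "(2::'a::field) \<noteq> 0" and three: "(3::'a) \<noteq> 0"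
  shows "\<exists>es. distinct es \<and> set es = In_edges (swirl_edges w) snd (NR N) \<and>
     vec_space.rank (w * 1) (block_concat (w * 1) (swirl_scalar_F w :: _ \<Rightarrow> 'a mat) es) = w * 1"
proof -
  have "finite N" using card_swirl_receiver_set[OF N] w card.infinite by fastforce
  then obtain es where es: "distinct es" "set es = In_edges (swirl_edges w) snd (NR N)"
    using finite_distinct_list In_edges_NR[OF N] by (metis finite_imageI)
  have len: "length es = w" using distinct_card[OF es(1)] es(2) card_In_edges_NR[OF N] by simp
  have F_car: "\<forall>e\<in>set es. (swirl_scalar_F w e :: 'a mat) \<in> carrier_mat w 1"
    by (simp add: swirl_scalar_F_def)
  define M where "M = block_concat w (swirl_scalar_F w :: _ \<Rightarrow> 'a mat) es"
  have M: "M \<in> carrier_mat w w" using block_concat_carrier[OF F_car] len unfolding M_def by simp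
  have "vec_space.rank w M = w"
  proof (subst rank_eq_dim_iff_orthogonal[OF M], intro ballI impI)
    fix \<phi> :: "'a vec" assume \<phi>: "\<phi> \<in> carrier_vec w" and orth: "\<forall>c\<in>set (cols M). c \<bullet> \<phi> = 0"
    have eq: "\<phi> $ j + swirl_coeff j b * \<phi> $ (Suc j mod w) = 0" if jb: "(j, b) \<in> N" for j b
    proof -
      let ?e = "(NW j b, NR N)"
      have "?e \<in> set es" using es(2) In_edges_NR[OF N] jb by auto
      moreover have "col (swirl_scalar_F w ?e :: 'a mat) 0 \<in> set (cols (swirl_scalar_F w ?e :: 'a mat))"
        by (simp add: swirl_scalar_F_def cols_def)
      ultimately have "col (swirl_scalar_F w ?e :: 'a mat) 0 \<in> set (cols M)"
        unfolding M_def set_cols_block_concat[OF F_car] by blast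
      then have "col (swirl_scalar_F w ?e :: 'a mat) 0 \<bullet> \<phi> = 0" using orth by blast
      then show ?thesis using col_swirl_scalar_F_NW_scalar_prod[OF swirl_receiver_set_bound[OF N jb] \<phi>] by simp
    qed
    obtain t bs where routing: "swirl_routing w t bs" and N_eq: "N = (\<lambda>a. (t a, bs a)) ` {..<w}"
      using swirl_receiver_setE[OF N] w by auto
    have "\<phi> $ a = 0" if "a < w" for a
      using swirl_coeff_routed_system_zero[OF two three w routing _ that] eq N_eq by blast
    then show "\<phi> = 0\<^sub>v w" using \<phi> by (intro eq_vecI) auto
  qed
  then show ?thesis using es unfolding M_def by auto
qed

theorem swirl_scalar_solvable:
  assumes w: "3 \<le> w" and two: "(2::'a::field) \<noteq> 0" and three: "(3::'a) \<noteq> 0"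
  shows "swirl_vl_solvable TYPE('a) w 1"
proof -
  let ?E = "swirl_edges w"
  define srcs where "srcs = map (\<lambda>a. (Src, NU a)) [0..<w]"
  have F_car: "\<forall>e\<in>set srcs. (swirl_scalar_F w e :: 'a mat) \<in> carrier_mat w 1"
    by (simp add: swirl_scalar_F_def)
  have "block_concat w (swirl_scalar_F w :: _ \<Rightarrow> 'a mat) srcs = 1\<^sub>m w"
  proof (rule eq_matI)
    fix i j assume "i < dim_row (1\<^sub>m w :: 'a mat)" "j < dim_col (1\<^sub>m w :: 'a mat)"
    then have "block_concat w (swirl_scalar_F w) srcs $$ (i, j * 1 + 0) = (swirl_scalar_F w (srcs ! j) :: 'a mat) $$ (i, 0)"
      using block_concat_index[OF F_car, of j 0 i] by (simp add: srcs_def)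
    then show "block_concat w (swirl_scalar_F w) srcs $$ (i, j) = (1\<^sub>m w :: 'a mat) $$ (i, j)"
      using \<open>i < _\<close> \<open>j < _\<close> by (simp add: srcs_def swirl_scalar_F_def)
  qed (use block_concat_carrier[OF F_car] in \<open>auto simp: srcs_def\<close>)
  moreover have "distinct srcs" "set srcs = Out_edges ?E fst Src"
    unfolding srcs_def Out_edges_Src by (auto simp: distinct_map inj_on_def)
  moreover have "\<forall>t\<in>swirl_receivers w. \<exists>es. distinct es \<and> set es = In_edges ?E snd t \<and>
      vec_space.rank (w * 1) (block_concat (w * 1) (swirl_scalar_F w :: _ \<Rightarrow> 'a mat) es) = w * 1"
    using swirl_scalar_F_full_rank[OF _ w two three] unfolding swirl_receivers_def by auto
  moreover have "\<forall>e\<in>?E. fst e \<noteq> Src \<longrightarrow> (swirl_scalar_F w e :: 'a mat) = mat (w * 1) 1 (\<lambda>(i, j).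
      \<Sum>d\<in>In_edges ?E snd (fst e). (swirl_scalar_F w d * swirl_scalar_K w d e) $$ (i, j))"
    using swirl_scalar_F_recursion w by fastforce
  moreover have "\<forall>d\<in>?E. \<forall>e\<in>?E. (swirl_scalar_K w d e :: 'a mat) \<in> carrier_mat 1 1 \<and>
      (snd d \<noteq> fst e \<longrightarrow> swirl_scalar_K w d e = 0\<^sub>m 1 1)"
    by (auto simp: swirl_scalar_K_def zero_mat_def)
  moreover have "\<forall>e\<in>?E. (swirl_scalar_F w e :: 'a mat) \<in> carrier_mat (w * 1) 1"
    by (simp add: swirl_scalar_F_def)
  ultimately have "is_vector_linear_solution ?E fst snd Src (swirl_receivers w) 1
      (swirl_scalar_K w :: _ \<Rightarrow> _ \<Rightarrow> 'a mat) (swirl_scalar_F w)"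
    unfolding is_vector_linear_solution_def Let_def card_Out_edges_Src by auto
  then show ?thesis unfolding swirl_vl_solvable_def vector_linear_solvable_def by blast
qed

section \<open>Closed walks in \<open>GF(2)\<^sup>L\<close> for \<open>L \<le> 3\<close>\<close>

definition nonzero_vecs :: "nat \<Rightarrow> 'a::zero vec set" where
  "nonzero_vecs L = carrier_vec L - {0\<^sub>v L}"

text \<open>The two transitions at a node \<open>v\<^sub>j\<close> of a vector solution: additive maps that are
  injective and disagree on every nonzero vector.\<close>
definition separated_pair :: "nat \<Rightarrow> ('a::field vec \<Rightarrow> 'a vec) \<Rightarrow> ('a vec \<Rightarrow> 'a vec) \<Rightarrow> bool" where
  "separated_pair L f0 f1 \<longleftrightarrow>
     (\<forall>x\<in>carrier_vec L. f0 x \<in> carrier_vec L \<and> f1 x \<in> carrier_vec L) \<and>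
     (\<forall>x\<in>carrier_vec L. \<forall>y\<in>carrier_vec L. f0 (x + y) = f0 x + f0 y \<and> f1 (x + y) = f1 x + f1 y) \<and>
     (\<forall>x\<in>nonzero_vecs L. f0 x \<noteq> 0\<^sub>v L \<and> f1 x \<noteq> 0\<^sub>v L \<and> f0 x \<noteq> f1 x)"

lemma separated_pair_sym: "separated_pair L f0 f1 \<Longrightarrow> separated_pair L f1 f0"
  unfolding separated_pair_def by metis

lemma separated_pair_carrier: "separated_pair L f0 f1 \<Longrightarrow> x \<in> carrier_vec L \<Longrightarrow> f0 x \<in> carrier_vec L"
  unfolding separated_pair_def by blast

lemma separated_pair_add:
  "separated_pair L f0 f1 \<Longrightarrow> x \<in> carrier_vec L \<Longrightarrow> y \<in> carrier_vec L \<Longrightarrow> f0 (x + y) = f0 x + f0 y"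
  unfolding separated_pair_def by blast

lemma separated_pair_nonzero: "separated_pair L f0 f1 \<Longrightarrow> x \<in> nonzero_vecs L \<Longrightarrow> f0 x \<in> nonzero_vecs L"
  unfolding separated_pair_def nonzero_vecs_def by blast

lemma separated_pair_distinct: "separated_pair L f0 f1 \<Longrightarrow> x \<in> nonzero_vecs L \<Longrightarrow> f0 x \<noteq> f1 x"
  unfolding separated_pair_def by blast

lemma card2_char2:
  assumes "CARD('a::{field,finite}) = 2"
  shows "(1::'a) + 1 = 0"
proof -
  have "UNIV = {0, 1::'a}"
    using assms by (intro card_subset_eq[symmetric]) auto
  then have "(1::'a) + 1 \<in> {0, 1}" by blast
  then show ?thesis by (metis add_cancel_right_right insertE singletonD zero_neq_one)
qed

lemma image_Collect_preimage:
  assumes "g ` A = A" "B \<subseteq> A"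
  shows "g ` {y \<in> A. g y \<in> B} = B"
proof
  show "B \<subseteq> g ` {y \<in> A. g y \<in> B}"
  proof
    fix b assume "b \<in> B"
    then obtain y where "y \<in> A" "b = g y" using assms by (metis imageE subsetD)
    then show "b \<in> g ` {y \<in> A. g y \<in> B}" using \<open>b \<in> B\<close> by blast
  qed
qed auto

lemma card_less_card_Un:
  assumes "finite P" "finite Q" "card P = card Q" "P \<noteq> Q"
  shows "card P < card (P \<union> Q)"
proof -
  have "\<not> Q \<subseteq> P" using card_subset_eq[OF assms(1)] assms(3,4) by metis
  then show ?thesis using assms(1,2) by (intro psubset_card_mono) auto
qed

text \<open>\<open>reach f x\<^sub>0 k\<close> is the set of states reachable from \<open>x\<^sub>0\<close> in \<open>k\<close> steps, where step \<open>j\<close>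
  applies \<open>f j b\<close> for a choice of \<open>b\<close>; \<open>coreach f Z n y m\<close> is the set of states in \<open>Z\<close> at time
  \<open>n - m\<close> from which \<open>y\<close> is reachable at time \<open>n\<close>.\<close>
primrec reach :: "(nat \<Rightarrow> bool \<Rightarrow> 'v \<Rightarrow> 'v) \<Rightarrow> 'v \<Rightarrow> nat \<Rightarrow> 'v set" where
  "reach f x0 0 = {x0}"
| "reach f x0 (Suc k) = f k True ` reach f x0 k \<union> f k False ` reach f x0 k"

primrec coreach :: "(nat \<Rightarrow> bool \<Rightarrow> 'v \<Rightarrow> 'v) \<Rightarrow> 'v set \<Rightarrow> nat \<Rightarrow> 'v \<Rightarrow> nat \<Rightarrow> 'v set" where
  "coreach f Z n y 0 = {y}"
| "coreach f Z n y (Suc m) =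
     {z \<in> Z. f (n - Suc m) True z \<in> coreach f Z n y m \<or> f (n - Suc m) False z \<in> coreach f Z n y m}"

lemma reach_walk:
  "y \<in> reach f x0 k \<Longrightarrow> \<exists>xs bs. xs 0 = x0 \<and> xs k = y \<and> (\<forall>j<k. xs (Suc j) = f j (bs j) (xs j))"
proof (induction k arbitrary: y)
  case 0
  then show ?case by (intro exI[of _ "\<lambda>_. x0"]) simp
next
  case (Suc k)
  then obtain z b where z: "z \<in> reach f x0 k" "y = f k b z" by auto
  obtain xs bs where "xs 0 = x0" "xs k = z" "\<forall>j<k. xs (Suc j) = f j (bs j) (xs j)"
    using Suc.IH[OF z(1)] by blast
  then show ?case using z
    by (intro exI[of _ "xs(Suc k := y)"] exI[of _ "bs(k := b)"]) (auto simp: less_Suc_eq)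
qed

lemma coreach_walk:
  "z \<in> coreach f Z n y m \<Longrightarrow> m \<le> n \<Longrightarrow>
     \<exists>xs bs. xs (n - m) = z \<and> xs n = y \<and> (\<forall>j. n - m \<le> j \<and> j < n \<longrightarrow> xs (Suc j) = f j (bs j) (xs j))"
proof (induction m arbitrary: z)
  case 0
  then show ?case by (intro exI[of _ "\<lambda>_. y"]) auto
next
  case (Suc m)
  let ?i = "n - Suc m"
  obtain b where "f ?i b z \<in> coreach f Z n y m" using Suc.prems(1) by auto
  then obtain xs bs where xs: "xs (n - m) = f ?i b z" "xs n = y"
    "\<forall>j. n - m \<le> j \<and> j < n \<longrightarrow> xs (Suc j) = f j (bs j) (xs j)"
    using Suc.IH Suc.prems(2) by fastforce
  have i: "?i < n" "Suc ?i = n - m" using Suc.prems(2) by auto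
  show ?case
  proof (intro exI[of _ "xs(?i := z)"] exI[of _ "bs(?i := b)"] conjI allI impI)
    fix j assume "n - Suc m \<le> j \<and> j < n"
    then show "(xs(?i := z)) (Suc j) = f j ((bs(?i := b)) j) ((xs(?i := z)) j)"
      using xs i by (cases "j = ?i") auto
  qed (use xs i in auto)
qed

context
  fixes L :: nat
  assumes card2: "CARD('a::{field,finite}) = 2"
begin

lemma add_self_char2: "(x::'a) + x = 0"
  using card2_char2[OF card2] by (metis distrib_left mult.right_neutral mult_zero_right)

lemma vec_add_self: "(x::'a vec) \<in> carrier_vec L \<Longrightarrow> x + x = 0\<^sub>v L"
  by (intro eq_vecI) (auto simp: add_self_char2)

lemma add_eq_0_iff_char2: "(a::'a) + b = 0 \<longleftrightarrow> a = b"
  by (metis add_self_char2 add_right_cancel)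

lemma vec_add_eq_0_iff: "(x::'a vec) \<in> carrier_vec L \<Longrightarrow> y \<in> carrier_vec L \<Longrightarrow> x + y = 0\<^sub>v L \<longleftrightarrow> x = y"
  by (auto simp: vec_eq_iff add_eq_0_iff_char2)

lemma vec_add_add_cancel: "(x::'a vec) \<in> carrier_vec L \<Longrightarrow> y \<in> carrier_vec L \<Longrightarrow> x + (x + y) = y"
  by (simp add: assoc_add_vec[symmetric] vec_add_self)

lemma finite_nonzero_vecs: "finite (nonzero_vecs L :: 'a vec set)"
  unfolding nonzero_vecs_def by simp

lemma card_nonzero_vecs: "card (nonzero_vecs L :: 'a vec set) = 2 ^ L - 1"
  unfolding nonzero_vecs_def by (simp add: card_Diff_singleton card_carrier_vec card2)

lemma separated_pair_inj:
  assumes f: "separated_pair L (f0 :: 'a vec \<Rightarrow> 'a vec) f1"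
  shows "inj_on f0 (carrier_vec L)"
proof (rule inj_onI)
  fix x y assume x: "x \<in> carrier_vec L" and y: "y \<in> carrier_vec L" and eq: "f0 x = f0 y"
  have "f0 (x + y) = 0\<^sub>v L"
    using separated_pair_add[OF f x y] eq vec_add_self separated_pair_carrier[OF f y] by simp
  then have "x + y \<notin> nonzero_vecs L" using separated_pair_nonzero[OF f] unfolding nonzero_vecs_def by blast
  then show "x = y" using vec_add_eq_0_iff[OF x y] x y unfolding nonzero_vecs_def by simp
qed

lemma separated_pair_image:
  assumes f: "separated_pair L (f0 :: 'a vec \<Rightarrow> 'a vec) f1"
  shows "f0 ` nonzero_vecs L = nonzero_vecs L"
proof (rule endo_inj_surj[OF finite_nonzero_vecs])
  show "f0 ` nonzero_vecs L \<subseteq> nonzero_vecs L" using separated_pair_nonzero[OF f] by blast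
  show "inj_on f0 (nonzero_vecs L)"
    using separated_pair_inj[OF f] by (rule inj_on_subset) (auto simp: nonzero_vecs_def)
qed

text \<open>A swap \<open>f\<^sub>0 x = f\<^sub>1 y\<close>, \<open>f\<^sub>0 y = f\<^sub>1 x\<close> would make \<open>f\<^sub>0\<close> and \<open>f\<^sub>1\<close> agree on \<open>x + y\<close>.\<close>
lemma separated_pair_no_swap:
  assumes f: "separated_pair L (f0 :: 'a vec \<Rightarrow> 'a vec) f1"
    and x: "x \<in> carrier_vec L" and y: "y \<in> carrier_vec L"
    and "f0 x = f1 y" "f0 y = f1 x"
  shows "x = y"
proof (rule ccontr)
  assume "x \<noteq> y"
  then have "x + y \<in> nonzero_vecs L" using vec_add_eq_0_iff[OF x y] x y unfolding nonzero_vecs_def by auto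
  moreover have "f0 (x + y) = f1 (x + y)"
    using separated_pair_add[OF f x y] separated_pair_add[OF separated_pair_sym[OF f] x y] assms(4,5)
      comm_add_vec[OF separated_pair_carrier[OF f x] separated_pair_carrier[OF f y]] by simp
  ultimately show False using separated_pair_distinct[OF f] by blast
qed


lemma separated_pair_3cycle_sum:
  assumes f: "separated_pair L (f0 :: 'a vec \<Rightarrow> 'a vec) f1"
    and x: "x \<in> carrier_vec L" and y: "y \<in> carrier_vec L" and z: "z \<in> carrier_vec L"
    and cyc: "f0 x = f1 y" "f0 y = f1 z" "f0 z = f1 x"
  shows "x + y + z = 0\<^sub>v L"
proof (rule ccontr)
  let ?s = "x + y + z"
  have f1: "separated_pair L f1 f0" using separated_pair_sym[OF f] .
  assume "?s \<noteq> 0\<^sub>v L"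
  then have "?s \<in> nonzero_vecs L" using x y z unfolding nonzero_vecs_def by simp
  moreover have "f0 ?s = f1 ?s"
  proof -
    have "f0 ?s = f0 x + f0 y + f0 z"
      using separated_pair_add[OF f, of "x + y" z] separated_pair_add[OF f, of x y] x y z by simp
    also have "\<dots> = f1 (y + z + x)"
      using separated_pair_add[OF f1, of "y + z" x] separated_pair_add[OF f1, of y z] x y z cyc by simp
    also have "y + z + x = ?s"
      using x y z by (metis add_carrier_vec assoc_add_vec comm_add_vec)
    finally show ?thesis .
  qed
  ultimately show False using separated_pair_distinct[OF f] by blast
qed

lemma separated_pair_3cycle_shift:
  assumes f: "separated_pair L (f0 :: 'a vec \<Rightarrow> 'a vec) f1"
    and x: "x \<in> carrier_vec L" and y: "y \<in> carrier_vec L" and z: "z \<in> carrier_vec L"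
    and cyc: "f0 x = f1 y" "f0 y = f1 z" "f0 z = f1 x" and sum: "x + y + z = 0\<^sub>v L"
    and w: "w \<in> carrier_vec L" "w \<noteq> y" and shift: "f0 w = f1 (w + x)"
  shows False
proof -
  have f1: "separated_pair L f1 f0" using separated_pair_sym[OF f] .
  have "x + z = y"
    using sum x y z vec_add_eq_0_iff[of "x + z" y]
    by (metis add_carrier_vec assoc_add_vec comm_add_vec)
  have "f0 (w + y) = f1 (w + x) + f1 z"
    using separated_pair_add[OF f w(1) y] shift cyc by simp
  also have "\<dots> = f1 (w + y)"
    using separated_pair_add[OF f1, of "w + x" z] w x z \<open>x + z = y\<close> by (simp add: assoc_add_vec)
  finally have "f0 (w + y) = f1 (w + y)" .
  moreover have "w + y \<in> nonzero_vecs L"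
    using w y vec_add_eq_0_iff unfolding nonzero_vecs_def by auto
  ultimately show False using separated_pair_distinct[OF f] by blast
qed

lemma carrier_vec_not_subset:
  assumes "L = 3" and "finite W" and "card (W :: 'a vec set) \<le> 4"
  shows "\<exists>w\<in>carrier_vec L. w \<notin> W"
proof (rule ccontr)
  assume "\<not> (\<exists>w\<in>carrier_vec L. w \<notin> W)"
  then have "card (carrier_vec L :: 'a vec set) \<le> card W"
    using assms(2) by (intro card_mono) auto
  then show False using assms by (simp add: card_carrier_vec card2)
qed

lemma carrier_vec_plane_coset_cover:
  assumes L: "L = 3" and x: "x \<in> nonzero_vecs L" and y: "y \<in> nonzero_vecs L" and "x \<noteq> y"
    and W: "W = {0\<^sub>v L, x, y, x + y}" and w: "w \<in> carrier_vec L" "w \<notin> W"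
    and v: "(v :: 'a vec) \<in> carrier_vec L"
  shows "v \<in> W \<or> (\<exists>u\<in>W. v = w + u)"
proof -
  have xc: "x \<in> carrier_vec L" and yc: "y \<in> carrier_vec L" using x y unfolding nonzero_vecs_def by auto
  have W_car: "W \<subseteq> carrier_vec L" using W xc yc by auto
  have "x + y \<noteq> x"
    using vec_add_add_cancel[OF xc yc] vec_add_self[OF xc] y unfolding nonzero_vecs_def by force
  moreover have "x + y \<noteq> y"
    using vec_add_add_cancel[OF yc xc] vec_add_self[OF yc] x comm_add_vec[OF xc yc]
    unfolding nonzero_vecs_def by force
  ultimately have "card W = 4"
    using W x y \<open>x \<noteq> y\<close> vec_add_eq_0_iff[OF xc yc] unfolding nonzero_vecs_def
    by (auto simp: card_insert_if)
  have yx: "y + x = x + y" using comm_add_vec xc yc by blast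
  have "y + (x + y) = x" "(x + y) + x = y" "(x + y) + y = x"
    using vec_add_add_cancel[OF yc xc] vec_add_add_cancel[OF xc yc] yx
      comm_add_vec[of "x + y" L x] comm_add_vec[of "x + y" L y] xc yc by auto
  then have closed: "u + u' \<in> W" if "u \<in> W" "u' \<in> W" for u u'
    using that unfolding W
    by (elim insertE emptyE) (simp_all add: xc yc yx vec_add_self vec_add_add_cancel)
  have inj: "inj_on (\<lambda>u. w + u) W"
    using W_car w(1) by (intro inj_onI) (metis subsetD vec_add_add_cancel)
  have disj: "W \<inter> (\<lambda>u. w + u) ` W = {}"
  proof (rule ccontr)
    assume "W \<inter> (\<lambda>u. w + u) ` W \<noteq> {}"
    then obtain u where u: "u \<in> W" "w + u \<in> W" by auto
    then have "(w + u) + u \<in> W" using closed by blast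
    then show False using w u W_car by (simp add: assoc_add_vec vec_add_self subset_iff)
  qed
  have "card (W \<union> (\<lambda>u. w + u) ` W) = card (carrier_vec L :: 'a vec set)"
    using card_Un_disjoint[OF _ _ disj] card_image[OF inj] \<open>card W = 4\<close> W
    by (simp add: card_carrier_vec card2 L)
  then have "W \<union> (\<lambda>u. w + u) ` W = carrier_vec L"
    using W_car w(1) by (intro card_subset_eq) auto
  then show ?thesis using v by blast
qed

lemma separated_pair_no_3cycle:
  assumes L: "L = 3" and f: "separated_pair L (f0 :: 'a vec \<Rightarrow> 'a vec) f1"
    and xyz: "x \<in> nonzero_vecs L" "y \<in> nonzero_vecs L" "z \<in> nonzero_vecs L" "x \<noteq> y" "y \<noteq> z" "x \<noteq> z"
    and cyc: "f0 x = f1 y" "f0 y = f1 z" "f0 z = f1 x"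
  shows False
proof -
  have x: "x \<in> carrier_vec L" and y: "y \<in> carrier_vec L" and z: "z \<in> carrier_vec L"
    using xyz unfolding nonzero_vecs_def by auto
  have f1: "separated_pair L f1 f0" using separated_pair_sym[OF f] .
  have sum: "x + y + z = 0\<^sub>v L" using separated_pair_3cycle_sum[OF f x y z cyc] .
  then have "z = x + y" using vec_add_eq_0_iff[of "x + y" z] x y z by auto
  have sum': "y + z + x = 0\<^sub>v L" "z + x + y = 0\<^sub>v L"
    using sum x y z by (metis add_carrier_vec assoc_add_vec comm_add_vec)+
  define W where "W = {0\<^sub>v L, x, y, x + y}"
  have "card W \<le> 4" unfolding W_def by (auto simp: card_insert_if)
  then obtain w where w: "w \<in> carrier_vec L" "w \<notin> W" using carrier_vec_not_subset[OF L, of W] W_def by blast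
  then have w_nz: "w \<in> nonzero_vecs L" unfolding nonzero_vecs_def W_def by auto
  obtain w' where w': "w' \<in> nonzero_vecs L" "f1 w' = f0 w"
    using separated_pair_image[OF f1] separated_pair_nonzero[OF f w_nz] by (metis imageE)
  have w'c: "w' \<in> carrier_vec L" using w' unfolding nonzero_vecs_def by auto
  have inj: "inj_on f0 (carrier_vec L)" using separated_pair_inj[OF f] .
  have "w' \<notin> {x, y, z}"
    using w' cyc inj_onD[OF inj] w x y z \<open>z = x + y\<close> unfolding W_def by auto
  moreover have "w' \<noteq> 0\<^sub>v L" using w' unfolding nonzero_vecs_def by auto
  ultimately obtain u where "u \<in> W" "w' = w + u"
    using carrier_vec_plane_coset_cover[OF L xyz(1,2,4) W_def w w'c] \<open>z = x + y\<close> unfolding W_def by auto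
  then consider "w' = w" | "w' = w + x" | "w' = w + y" | "w' = w + z"
    using w \<open>z = x + y\<close> unfolding W_def by auto
  then show False
  proof cases
    case 1
    then show False using w' separated_pair_distinct[OF f w_nz] by simp
  next
    case 2
    show False by (rule separated_pair_3cycle_shift[OF f x y z cyc sum w(1)]) (use w 2 w' in \<open>auto simp: W_def\<close>)
  next
    case 3
    show False by (rule separated_pair_3cycle_shift[OF f y z x cyc(2,3,1) sum'(1) w(1)])
      (use w 3 w' \<open>z = x + y\<close> in \<open>auto simp: W_def\<close>)
  next
    case 4
    show False by (rule separated_pair_3cycle_shift[OF f z x y cyc(3,1,2) sum'(2) w(1)])
      (use w 4 w' in \<open>auto simp: W_def\<close>)
  qed
qed

lemma separated_pair_no_small_invariant:
  assumes L: "L \<le> 3" and f: "separated_pair L (f0 :: 'a vec \<Rightarrow> 'a vec) f1"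
    and S: "S \<subseteq> nonzero_vecs L" "S \<noteq> {}" "card S \<le> 3" "card S < card (nonzero_vecs L :: 'a vec set)"
    and inv: "f0 ` S = f1 ` S"
  shows False
proof -
  have "finite S" using finite_nonzero_vecs S(1) finite_subset by blast
  have dist: "f0 x \<noteq> f1 x" if "x \<in> S" for x using separated_pair_distinct[OF f] S(1) that by blast
  have car: "x \<in> carrier_vec L" if "x \<in> S" for x using S(1) that unfolding nonzero_vecs_def by auto
  have inj: "f0 x \<noteq> f0 y" if "x \<in> S" "y \<in> S" "x \<noteq> y" for x y
    using inj_onD[OF separated_pair_inj[OF f]] car that by blast
  have "card S \<noteq> 0" using S(2) \<open>finite S\<close> by simp
  then have "card S = 1 \<or> card S = 2 \<or> card S = 3" using S(3) by linarith
  then consider x where "S = {x}" | x y where "S = {x, y}" "x \<noteq> y"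
    | x y z where "S = {x, y, z}" "x \<noteq> y" "y \<noteq> z" "x \<noteq> z"
    by (auto simp: card_1_singleton_iff card_2_iff card_3_iff)
  then show False
  proof cases
    case 1
    then show False using inv dist by auto
  next
    case (2 x y)
    then have "f0 x = f1 y" "f0 y = f1 x" using inv dist by (auto simp: image_iff)
    then show False using separated_pair_no_swap[OF f] car 2 by blast
  next
    case (3 x y z)
    have "card (nonzero_vecs L :: 'a vec set) > 3" using S(4) 3 by simp
    then have "L = 3" using L card_nonzero_vecs by (cases "L = 0 \<or> L = 1 \<or> L = 2") auto
    have nz: "x \<in> nonzero_vecs L" "y \<in> nonzero_vecs L" "z \<in> nonzero_vecs L" using S(1) 3 by auto
    have "f0 x = f1 y \<or> f0 x = f1 z" "f0 y = f1 x \<or> f0 y = f1 z" "f0 z = f1 x \<or> f0 z = f1 y"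
      using inv dist 3 by (auto simp: image_iff)
    moreover have "f0 x \<noteq> f0 y" "f0 y \<noteq> f0 z" "f0 x \<noteq> f0 z" using inj 3 by auto
    ultimately have "(f0 x = f1 y \<and> f0 y = f1 z \<and> f0 z = f1 x) \<or> (f0 x = f1 z \<and> f0 z = f1 y \<and> f0 y = f1 x)"
      by metis
    then show False
      using separated_pair_no_3cycle[OF \<open>L = 3\<close> f nz 3(2-4)]
        separated_pair_no_3cycle[OF \<open>L = 3\<close> f nz(1,3,2) 3(4) 3(3)[symmetric] 3(2)] by blast
  qed
qed

lemma card_reach_step:
  assumes L: "L \<le> 3" and f: "separated_pair L (f0 :: 'a vec \<Rightarrow> 'a vec) f1"
    and A: "A \<subseteq> nonzero_vecs L" "A \<noteq> {}"
  shows "min (Suc (card A)) (min 4 (card (nonzero_vecs L :: 'a vec set))) \<le> card (f0 ` A \<union> f1 ` A)"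
proof -
  have f1: "separated_pair L f1 f0" using separated_pair_sym[OF f] .
  have "finite A" using finite_nonzero_vecs A(1) finite_subset by blast
  have "A \<subseteq> carrier_vec L" using A(1) unfolding nonzero_vecs_def by auto
  then have card_A: "card (f0 ` A) = card A" "card (f1 ` A) = card A"
    using card_image inj_on_subset separated_pair_inj[OF f] separated_pair_inj[OF f1] by metis+
  have "card (f0 ` A) \<le> card (f0 ` A \<union> f1 ` A)" using \<open>finite A\<close> by (simp add: card_mono)
  moreover have "card A < card (f0 ` A \<union> f1 ` A)" if "card A < min 4 (card (nonzero_vecs L :: 'a vec set))"
  proof -
    have "card A \<le> 3" "card A < card (nonzero_vecs L :: 'a vec set)" using that by auto
    then have "f0 ` A \<noteq> f1 ` A"
      using separated_pair_no_small_invariant[OF L f A] by blast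
    then show ?thesis using card_less_card_Un[of "f0 ` A" "f1 ` A"] \<open>finite A\<close> card_A by simp
  qed
  ultimately show ?thesis using card_A by (auto simp: min_def)
qed

lemma card_coreach_step:
  assumes L: "L \<le> 3" and f: "separated_pair L (f0 :: 'a vec \<Rightarrow> 'a vec) f1"
    and B: "B \<subseteq> nonzero_vecs L" "B \<noteq> {}"
  shows "min (Suc (card B)) (min 4 (card (nonzero_vecs L :: 'a vec set))) \<le>
    card {y \<in> nonzero_vecs L. f0 y \<in> B \<or> f1 y \<in> B}"
proof -
  have f1: "separated_pair L f1 f0" using separated_pair_sym[OF f] .
  define P0 where "P0 = {y \<in> nonzero_vecs L. f0 y \<in> B}"
  define P1 where "P1 = {y \<in> nonzero_vecs L. f1 y \<in> B}"
  have im: "f0 ` P0 = B" "f1 ` P1 = B"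
    unfolding P0_def P1_def using image_Collect_preimage B(1) separated_pair_image[OF f] separated_pair_image[OF f1]
    by blast+
  have "P0 \<subseteq> carrier_vec L" "P1 \<subseteq> carrier_vec L" unfolding P0_def P1_def nonzero_vecs_def by auto
  then have card_P: "card P0 = card B" "card P1 = card B"
    using card_image inj_on_subset separated_pair_inj[OF f] separated_pair_inj[OF f1] im by metis+
  have fin: "finite P0" "finite P1" unfolding P0_def P1_def using finite_nonzero_vecs by auto
  have "card B > 0" using B finite_nonzero_vecs finite_subset card_gt_0_iff by blast
  have "card P0 \<le> card (P0 \<union> P1)" using fin by (simp add: card_mono)
  moreover have "card P0 < card (P0 \<union> P1)" if "card B < min 4 (card (nonzero_vecs L :: 'a vec set))"
  proof -
    have "P0 \<noteq> P1"
    proof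
      assume "P0 = P1"
      then have "f0 ` P0 = f1 ` P0" using im by simp
      moreover have "P0 \<noteq> {}" using card_P(1) \<open>card B > 0\<close> by auto
      moreover have "P0 \<subseteq> nonzero_vecs L" unfolding P0_def by auto
      moreover have "card P0 \<le> 3" "card P0 < card (nonzero_vecs L :: 'a vec set)" using that card_P by auto
      ultimately show False using separated_pair_no_small_invariant[OF L f] by blast
    qed
    then show ?thesis using card_less_card_Un[OF fin] card_P by simp
  qed
  moreover have "P0 \<union> P1 = {y \<in> nonzero_vecs L. f0 y \<in> B \<or> f1 y \<in> B}" unfolding P0_def P1_def by auto
  ultimately show ?thesis using card_P by (auto simp: min_def)
qed

lemma card_reach:
  assumes L: "L \<le> 3" and f: "\<forall>j<k. separated_pair L (f j True :: 'a vec \<Rightarrow> 'a vec) (f j False)"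
    and x0: "x0 \<in> nonzero_vecs L"
  shows "reach f x0 k \<subseteq> nonzero_vecs L \<and> reach f x0 k \<noteq> {} \<and>
    min (Suc k) (min 4 (card (nonzero_vecs L :: 'a vec set))) \<le> card (reach f x0 k)"
  using f
proof (induction k)
  case 0
  then show ?case using x0 by simp
next
  case (Suc k)
  then have IH: "reach f x0 k \<subseteq> nonzero_vecs L" "reach f x0 k \<noteq> {}"
    "min (Suc k) (min 4 (card (nonzero_vecs L :: 'a vec set))) \<le> card (reach f x0 k)" by auto
  have f_k: "separated_pair L (f k True) (f k False)" using Suc.prems by simp
  have "f k b ` reach f x0 k \<subseteq> nonzero_vecs L" for b
    using separated_pair_nonzero[OF f_k] separated_pair_nonzero[OF separated_pair_sym[OF f_k]] IH(1)
    by (cases b) auto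
  then show ?case
    using card_reach_step[OF L f_k IH(1,2)] IH(2,3) by auto
qed

lemma card_coreach:
  assumes L: "L \<le> 3" and f: "\<forall>j<n. separated_pair L (f j True :: 'a vec \<Rightarrow> 'a vec) (f j False)"
    and y: "y \<in> nonzero_vecs L" and "m \<le> n"
  shows "coreach f (nonzero_vecs L) n y m \<subseteq> nonzero_vecs L \<and> coreach f (nonzero_vecs L) n y m \<noteq> {} \<and>
    min (Suc m) (min 4 (card (nonzero_vecs L :: 'a vec set))) \<le> card (coreach f (nonzero_vecs L) n y m)"
  using \<open>m \<le> n\<close>
proof (induction m)
  case 0
  then show ?case using y by simp
next
  case (Suc m)
  then have IH: "coreach f (nonzero_vecs L) n y m \<subseteq> nonzero_vecs L" "coreach f (nonzero_vecs L) n y m \<noteq> {}"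
    "min (Suc m) (min 4 (card (nonzero_vecs L :: 'a vec set))) \<le> card (coreach f (nonzero_vecs L) n y m)"
    by auto
  have "separated_pair L (f (n - Suc m) True) (f (n - Suc m) False)" using f Suc.prems by simp
  from card_coreach_step[OF L this IH(1,2)] IH(3)
  have card: "min (Suc (Suc m)) (min 4 (card (nonzero_vecs L :: 'a vec set))) \<le> card (coreach f (nonzero_vecs L) n y (Suc m))"
    by (simp add: min_def split: if_split_asm)
  moreover have "card (nonzero_vecs L :: 'a vec set) > 0"
    using y finite_nonzero_vecs card_gt_0_iff by blast
  ultimately have "card (coreach f (nonzero_vecs L) n y (Suc m)) \<noteq> 0" by linarith
  then have "coreach f (nonzero_vecs L) n y (Suc m) \<noteq> {}" by (metis card.empty)
  with card show ?case by auto
qed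

text \<open>Three forward steps from \<open>x\<^sub>0\<close> and \<open>w - 3 \<ge> 3\<close> backward steps to \<open>x\<^sub>0\<close> each reach at
  least \<open>min 4 |Z|\<close> of the \<open>|Z| \<in> {1, 3, 7}\<close> nonzero vectors, so the two sets meet.\<close>
lemma closed_walk_exists:
  assumes L: "1 \<le> L" "L \<le> 3" and w: "6 \<le> w"
    and f: "\<forall>j<w. separated_pair L (f j True :: 'a vec \<Rightarrow> 'a vec) (f j False)"
  shows "\<exists>xs bs. xs 0 \<in> nonzero_vecs L \<and> (\<forall>j<w. xs (Suc j) = f j (bs j) (xs j)) \<and> xs w = xs 0"
proof -
  let ?Z = "nonzero_vecs L :: 'a vec set"
  have "L = 1 \<or> L = 2 \<or> L = 3" using L by auto
  then have "(2::nat) ^ L - 1 \<in> {1, 3, 7}" by auto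
  then have "card ?Z \<in> {1, 3, 7}" by (simp only: card_nonzero_vecs)
  then obtain x0 where x0: "x0 \<in> ?Z" by fastforce
  define A where "A = reach f x0 3"
  define B where "B = coreach f ?Z w x0 (w - 3)"
  have A: "A \<subseteq> ?Z" "min 4 (card ?Z) \<le> card A"
    using card_reach[OF L(2) _ x0, of 3 f] f w unfolding A_def by (auto simp: numeral_eq_Suc)
  have B: "B \<subseteq> ?Z" "min 4 (card ?Z) \<le> card B"
    using card_coreach[OF L(2) f x0, of "w - 3"] w unfolding B_def by auto
  have "A \<inter> B \<noteq> {}"
  proof
    assume "A \<inter> B = {}"
    then have "card A + card B \<le> card ?Z"
      using A(1) B(1) finite_nonzero_vecs card_Un_disjoint card_mono
      by (metis Un_least finite_subset)
    then show False using A(2) B(2) \<open>card ?Z \<in> {1, 3, 7}\<close> by auto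
  qed
  then obtain y where "y \<in> A" "y \<in> B" by blast
  obtain xs1 bs1 where w1: "xs1 0 = x0" "xs1 3 = y" "\<forall>j<3. xs1 (Suc j) = f j (bs1 j) (xs1 j)"
    using reach_walk[of y f x0 3] \<open>y \<in> A\<close> unfolding A_def by blast
  have "w - (w - 3) = 3" using w by simp
  then obtain xs2 bs2 where w2: "xs2 3 = y" "xs2 w = x0" "\<forall>j. 3 \<le> j \<and> j < w \<longrightarrow> xs2 (Suc j) = f j (bs2 j) (xs2 j)"
    using coreach_walk[OF \<open>y \<in> B\<close>[unfolded B_def]] by fastforce
  define xs where "xs j = (if j \<le> 3 then xs1 j else xs2 j)" for j
  define bs where "bs j = (if j < 3 then bs1 j else bs2 j)" for j
  have "xs (Suc j) = f j (bs j) (xs j)" if "j < w" for j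
  proof (cases "j < 3")
    case True
    then show ?thesis using w1 unfolding xs_def bs_def by simp
  next
    case False
    then have "xs j = xs2 j" using w1 w2 unfolding xs_def by (cases "j = 3") auto
    then show ?thesis using w2 False that unfolding xs_def bs_def by simp
  qed
  moreover have "xs 0 \<in> ?Z" "xs w = xs 0" using x0 w1 w2 w unfolding xs_def by auto
  ultimately show ?thesis by blast
qed

end

section \<open>No vector linear solution over \<open>GF(2)\<^sup>L\<close> for \<open>L \<le> 3\<close>\<close>

lemma edge_Src_NU: "a < w \<Longrightarrow> (Src, NU a) \<in> swirl_edges w"
  unfolding swirl_edges_iff by auto

lemma edge_NU_NV: "j < w \<Longrightarrow> (NU j, NV j) \<in> swirl_edges w"
  unfolding swirl_edges_iff by auto

lemma edge_NU_Suc_NV: "j < w \<Longrightarrow> (NU (Suc j mod w), NV j) \<in> swirl_edges w"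
  unfolding swirl_edges_iff by auto

lemma edge_NV_NW: "j < w \<Longrightarrow> (NV j, NW j b) \<in> swirl_edges w"
  unfolding swirl_edges_iff by auto

lemma edge_NW_NR: "N \<in> swirl_receiver_sets w \<Longrightarrow> (j, b) \<in> N \<Longrightarrow> (NW j b, NR N) \<in> swirl_edges w"
  unfolding swirl_edges_iff by auto

definition vec_mat :: "'a::field vec \<Rightarrow> 'a mat \<Rightarrow> 'a vec" where
  "vec_mat \<phi> X = transpose_mat X *\<^sub>v \<phi>"

lemma vec_mat_carrier: "X \<in> carrier_mat m k \<Longrightarrow> vec_mat \<phi> X \<in> carrier_vec k"
  unfolding vec_mat_def by (simp add: carrier_vecI)

lemma vec_mat_mult:
  "X \<in> carrier_mat m k \<Longrightarrow> M \<in> carrier_mat k l \<Longrightarrow> \<phi> \<in> carrier_vec m \<Longrightarrow>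
     vec_mat \<phi> (X * M) = vec_mat (vec_mat \<phi> X) M"
  unfolding vec_mat_def by (simp add: transpose_mult[of X m k M l] assoc_mult_mat_vec[of _ l k _ m])

lemma vec_mat_add:
  "X \<in> carrier_mat m k \<Longrightarrow> Y \<in> carrier_mat m k \<Longrightarrow> \<phi> \<in> carrier_vec m \<Longrightarrow>
     vec_mat \<phi> (X + Y) = vec_mat \<phi> X + vec_mat \<phi> Y"
  unfolding vec_mat_def by (simp add: transpose_add add_mult_distrib_mat_vec[of _ k m])

lemma vec_mat_add_vec:
  "M \<in> carrier_mat m k \<Longrightarrow> x \<in> carrier_vec m \<Longrightarrow> y \<in> carrier_vec m \<Longrightarrow>
     vec_mat (x + y) M = vec_mat x M + vec_mat y M"
  unfolding vec_mat_def by (simp add: mult_add_distrib_mat_vec[of _ k m])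

lemma vec_mat_zero: "M \<in> carrier_mat m k \<Longrightarrow> vec_mat (0\<^sub>v m) M = 0\<^sub>v k"
  unfolding vec_mat_def by (intro eq_vecI) auto

lemma col_scalar_prod_vec_mat:
  "X \<in> carrier_mat m k \<Longrightarrow> \<phi> \<in> carrier_vec m \<Longrightarrow> c < k \<Longrightarrow> col X c \<bullet> \<phi> = vec_mat \<phi> X $ c"
  unfolding vec_mat_def by simp

definition block_vec :: "nat \<Rightarrow> 'a vec \<Rightarrow> nat \<Rightarrow> 'a vec" where
  "block_vec L \<phi> p = vec L (\<lambda>k. \<phi> $ (p * L + k))"

lemma mat_index_eq: "M \<in> carrier_mat m n \<Longrightarrow> mat m n (\<lambda>(i, j). M $$ (i, j)) = M"
  by (intro eq_matI) auto

lemma mat_index_add_eq: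
  "X \<in> carrier_mat m n \<Longrightarrow> Y \<in> carrier_mat m n \<Longrightarrow> mat m n (\<lambda>(i, j). X $$ (i, j) + Y $$ (i, j)) = X + Y"
  by (intro eq_matI) auto

text \<open>The clauses of \<open>is_vector_linear_solution\<close> for the Swirl network; \<open>srcs\<close> is the order
  of the source edges in which the source kernels form the identity.\<close>
locale swirl_vector_solution =
  fixes w L :: nat and K :: "snode \<times> snode \<Rightarrow> snode \<times> snode \<Rightarrow> 'a::field mat"
    and F :: "snode \<times> snode \<Rightarrow> 'a mat" and srcs :: "(snode \<times> snode) list"
  assumes w: "4 \<le> w"
    and K_carrier: "\<forall>d\<in>swirl_edges w. \<forall>e\<in>swirl_edges w. K d e \<in> carrier_mat L L"
    and F_carrier: "\<forall>e\<in>swirl_edges w. F e \<in> carrier_mat (w * L) L"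
    and srcs_distinct: "distinct srcs" and set_srcs: "set srcs = Out_edges (swirl_edges w) fst Src"
    and F_srcs: "block_concat (w * L) F srcs = 1\<^sub>m (w * L)"
    and F_rec: "\<forall>e\<in>swirl_edges w. fst e \<noteq> Src \<longrightarrow> F e = mat (w * L) L (\<lambda>(i, j).
      \<Sum>d\<in>In_edges (swirl_edges w) snd (fst e). (F d * K d e) $$ (i, j))"
    and receiver_rank: "\<forall>t\<in>swirl_receivers w. \<exists>es. distinct es \<and> set es = In_edges (swirl_edges w) snd t \<and>
      vec_space.rank (w * L) (block_concat (w * L) F es) = w * L"
begin

abbreviation "E \<equiv> swirl_edges w"
abbreviation "n \<equiv> w * L"

lemma length_srcs: "length srcs = w"
  using distinct_card[OF srcs_distinct] set_srcs card_Out_edges_Src by simp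

definition src_pos :: "nat \<Rightarrow> nat" where
  "src_pos a = inv_into {..<w} (\<lambda>p. srcs ! p) (Src, NU a)"

definition src_node :: "nat \<Rightarrow> nat" where
  "src_node p = (case snd (srcs ! p) of NU a \<Rightarrow> a | _ \<Rightarrow> 0)"

lemma src_pos: "a < w \<Longrightarrow> src_pos a < w \<and> srcs ! src_pos a = (Src, NU a)"
proof -
  assume "a < w"
  then have y: "(Src, NU a) \<in> (\<lambda>p. srcs ! p) ` {..<w}"
    using set_srcs Out_edges_Src length_srcs by (auto simp: set_conv_nth)
  show ?thesis unfolding src_pos_def using inv_into_into[OF y] f_inv_into_f[OF y] by simp
qed

lemma src_node_src_pos: "a < w \<Longrightarrow> src_node (src_pos a) = a"
  using src_pos by (simp add: src_node_def)

lemma F_Src_NU_index: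
  assumes a: "a < w" and i: "i < n" and k: "k < L"
  shows "F (Src, NU a) $$ (i, k) = (if i = src_pos a * L + k then 1 else 0)"
proof -
  have "\<forall>e\<in>set srcs. F e \<in> carrier_mat n L" using F_carrier set_srcs unfolding Out_edges_def by auto
  then have "block_concat n F srcs $$ (i, src_pos a * L + k) = F (srcs ! src_pos a) $$ (i, k)"
    using block_concat_index[of srcs F n L "src_pos a" k i] src_pos[OF a] length_srcs k i by simp
  moreover have "src_pos a * L + k < n" using block_index_less src_pos[OF a] k by blast
  ultimately show ?thesis using F_srcs src_pos[OF a] i by simp
qed

lemma vec_mat_F_Src_NU:
  assumes a: "a < w" and \<phi>: "\<phi> \<in> carrier_vec n"
  shows "vec_mat \<phi> (F (Src, NU a)) = block_vec L \<phi> (src_pos a)"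
proof (rule eq_vecI)
  have Fa: "F (Src, NU a) \<in> carrier_mat n L" using F_carrier edge_Src_NU[OF a] by blast
  then show "dim_vec (vec_mat \<phi> (F (Src, NU a))) = dim_vec (block_vec L \<phi> (src_pos a))"
    using vec_mat_carrier[OF Fa] by (simp add: block_vec_def)
  fix k assume "k < dim_vec (block_vec L \<phi> (src_pos a))"
  then have k: "k < L" by (simp add: block_vec_def)
  have "vec_mat \<phi> (F (Src, NU a)) $ k = (\<Sum>i<n. (if i = src_pos a * L + k then 1 else 0) * \<phi> $ i)"
    using col_scalar_prod_vec_mat[OF Fa \<phi> k, symmetric] Fa \<phi> k F_Src_NU_index[OF a _ k]
    by (simp add: scalar_prod_def lessThan_atLeast0)
  also have "\<dots> = (\<Sum>i<n. if i = src_pos a * L + k then \<phi> $ (src_pos a * L + k) else 0)"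
    by (rule sum.cong) auto
  also have "\<dots> = \<phi> $ (src_pos a * L + k)"
    using block_index_less src_pos[OF a] k by simp
  finally show "vec_mat \<phi> (F (Src, NU a)) $ k = block_vec L \<phi> (src_pos a) $ k"
    using k by (simp add: block_vec_def)
qed

lemma F_single_in_edge:
  assumes "e \<in> E" "fst e \<noteq> Src" "d \<in> E" "In_edges E snd (fst e) = {d}"
  shows "F e = F d * K d e"
  using F_rec assms F_carrier K_carrier mat_index_eq[of "F d * K d e" n L] by auto

lemma F_NU_NV: "a < w \<Longrightarrow> (NU a, NV j) \<in> E \<Longrightarrow> F (NU a, NV j) = F (Src, NU a) * K (Src, NU a) (NU a, NV j)"
  using F_single_in_edge In_edges_NU edge_Src_NU by simp

lemma F_NW_NR:
  "N \<in> swirl_receiver_sets w \<Longrightarrow> (j, b) \<in> N \<Longrightarrow> F (NW j b, NR N) = F (NV j, NW j b) * K (NV j, NW j b) (NW j b, NR N)"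
  using F_single_in_edge In_edges_NW edge_NW_NR edge_NV_NW swirl_receiver_set_bound by simp

lemma F_NV_NW:
  assumes j: "j < w"
  shows "F (NV j, NW j b) = F (NU j, NV j) * K (NU j, NV j) (NV j, NW j b) +
    F (NU (Suc j mod w), NV j) * K (NU (Suc j mod w), NV j) (NV j, NW j b)"
proof -
  let ?d1 = "(NU j, NV j)" and ?d2 = "(NU (Suc j mod w), NV j)" and ?e = "(NV j, NW j b)"
  have "?d1 \<noteq> ?d2" using j w by (simp add: Suc_mod_if)
  then have "F ?e = mat n L (\<lambda>(i, j'). (F ?d1 * K ?d1 ?e) $$ (i, j') + (F ?d2 * K ?d2 ?e) $$ (i, j'))"
    using F_rec edge_NV_NW[OF j] In_edges_NV[OF j] by simp
  also have "\<dots> = F ?d1 * K ?d1 ?e + F ?d2 * K ?d2 ?e"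
    using F_carrier K_carrier edge_NU_NV[OF j] edge_NU_Suc_NV[OF j] edge_NV_NW[OF j]
    by (intro mat_index_add_eq mult_carrier_mat) blast+
  finally show ?thesis .
qed

text \<open>The transfer of the source block of \<open>u\<^sub>j\<close>, resp. \<open>u\<^bsub>j+1\<^esub>\<close>, to the edge from \<open>v\<^sub>j\<close>
  to the layer-4 node \<open>(j, b)\<close>.\<close>
definition transfer_own :: "nat \<Rightarrow> bool \<Rightarrow> 'a mat" where
  "transfer_own j b = K (Src, NU j) (NU j, NV j) * K (NU j, NV j) (NV j, NW j b)"

definition transfer_next :: "nat \<Rightarrow> bool \<Rightarrow> 'a mat" where
  "transfer_next j b =
     K (Src, NU (Suc j mod w)) (NU (Suc j mod w), NV j) * K (NU (Suc j mod w), NV j) (NV j, NW j b)"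

lemma transfer_carrier:
  assumes "j < w" shows "transfer_own j b \<in> carrier_mat L L" "transfer_next j b \<in> carrier_mat L L"
  unfolding transfer_own_def transfer_next_def
  using K_carrier edge_Src_NU assms edge_NU_NV edge_NU_Suc_NV edge_NV_NW mod_less_divisor
  by (meson mult_carrier_mat order_le_less_trans zero_le)+

lemma vec_mat_F_NU_NV_mult:
  assumes a: "a < w" and e: "(NU a, NV j) \<in> E" and \<phi>: "\<phi> \<in> carrier_vec n" and M: "M \<in> carrier_mat L L"
  shows "vec_mat \<phi> (F (NU a, NV j) * M) = vec_mat (block_vec L \<phi> (src_pos a)) (K (Src, NU a) (NU a, NV j) * M)"
proof -
  have Fs: "F (Src, NU a) \<in> carrier_mat n L" using F_carrier edge_Src_NU[OF a] by blast
  have K1: "K (Src, NU a) (NU a, NV j) \<in> carrier_mat L L" using K_carrier edge_Src_NU[OF a] e by blast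
  have "vec_mat \<phi> (F (NU a, NV j) * M) = vec_mat (vec_mat \<phi> (F (Src, NU a))) (K (Src, NU a) (NU a, NV j) * M)"
    using F_NU_NV[OF a e] vec_mat_mult[OF Fs _ \<phi>, of "K (Src, NU a) (NU a, NV j) * M" L] K1 M
    by (simp add: assoc_mult_mat[OF Fs K1 M])
  then show ?thesis using vec_mat_F_Src_NU[OF a \<phi>] by simp
qed

lemma vec_mat_F_NV_NW:
  assumes j: "j < w" and \<phi>: "\<phi> \<in> carrier_vec n"
  shows "vec_mat \<phi> (F (NV j, NW j b)) = vec_mat (block_vec L \<phi> (src_pos j)) (transfer_own j b) +
    vec_mat (block_vec L \<phi> (src_pos (Suc j mod w))) (transfer_next j b)"
proof -
  let ?d1 = "(NU j, NV j)" and ?d2 = "(NU (Suc j mod w), NV j)" and ?e = "(NV j, NW j b)"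
  have K: "K ?d1 ?e \<in> carrier_mat L L" "K ?d2 ?e \<in> carrier_mat L L"
    using K_carrier edge_NU_NV[OF j] edge_NU_Suc_NV[OF j] edge_NV_NW[OF j] by blast+
  have "F ?d1 * K ?d1 ?e \<in> carrier_mat n L" "F ?d2 * K ?d2 ?e \<in> carrier_mat n L"
    using F_carrier K edge_NU_NV[OF j] edge_NU_Suc_NV[OF j] by (meson mult_carrier_mat)+
  then have "vec_mat \<phi> (F ?e) = vec_mat \<phi> (F ?d1 * K ?d1 ?e) + vec_mat \<phi> (F ?d2 * K ?d2 ?e)"
    using F_NV_NW[OF j] vec_mat_add \<phi> by simp
  then show ?thesis
    unfolding transfer_own_def transfer_next_def
    using vec_mat_F_NU_NV_mult[OF j edge_NU_NV[OF j] \<phi> K(1)]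
      vec_mat_F_NU_NV_mult[OF _ edge_NU_Suc_NV[OF j] \<phi> K(2)] j by simp
qed

lemma receiver_orthogonal_zero:
  assumes N: "N \<in> swirl_receiver_sets w" and \<phi>: "\<phi> \<in> carrier_vec n"
    and orth: "\<forall>(j, b)\<in>N. vec_mat \<phi> (F (NV j, NW j b)) = 0\<^sub>v L"
  shows "\<phi> = 0\<^sub>v n"
proof -
  obtain es where es: "distinct es" "set es = In_edges E snd (NR N)" "vec_space.rank n (block_concat n F es) = n"
    using receiver_rank N unfolding swirl_receivers_def by blast
  have F_es: "\<forall>e\<in>set es. F e \<in> carrier_mat n L" using F_carrier es(2) unfolding In_edges_def by auto
  have "length es = w" using distinct_card[OF es(1)] es(2) card_In_edges_NR[OF N] by simp
  then have M: "block_concat n F es \<in> carrier_mat n n"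
    using block_concat_carrier[OF F_es] by (simp add: mult.commute)
  have "\<forall>c\<in>set (cols (block_concat n F es)). c \<bullet> \<phi> = 0"
  proof
    fix c assume "c \<in> set (cols (block_concat n F es))"
    then obtain e where e: "e \<in> set es" "c \<in> set (cols (F e))" using set_cols_block_concat[OF F_es] by auto
    obtain j b where jb: "(j, b) \<in> N" "e = (NW j b, NR N)" using e(1) es(2) In_edges_NR[OF N] by auto
    have j: "j < w" using swirl_receiver_set_bound[OF N jb(1)] .
    have Fe: "F e \<in> carrier_mat n L" using F_es e(1) by blast
    obtain k where k: "k < L" "c = col (F e) k" using e(2) Fe by (auto simp: in_set_conv_nth)
    have K: "K (NV j, NW j b) (NW j b, NR N) \<in> carrier_mat L L"
      using K_carrier edge_NV_NW[OF j] edge_NW_NR[OF N jb(1)] by blast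
    have "F (NV j, NW j b) \<in> carrier_mat n L" using F_carrier edge_NV_NW[OF j] by blast
    then have "vec_mat \<phi> (F e) = vec_mat (vec_mat \<phi> (F (NV j, NW j b))) (K (NV j, NW j b) (NW j b, NR N))"
      using F_NW_NR[OF N jb(1)] jb(2) vec_mat_mult K \<phi> by simp
    also have "\<dots> = 0\<^sub>v L" using orth jb(1) vec_mat_zero[OF K] by auto
    finally show "c \<bullet> \<phi> = 0" using col_scalar_prod_vec_mat[OF Fe \<phi> k(1)] k by simp
  qed
  then show ?thesis using rank_eq_dim_iff_orthogonal[OF M] es(3) \<phi> by blast
qed

definition stack_vec :: "(nat \<Rightarrow> 'a vec) \<Rightarrow> 'a vec" where
  "stack_vec g = vec n (\<lambda>i. g (src_node (i div L)) $ (i mod L))"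

lemma block_vec_stack_vec: "a < w \<Longrightarrow> g a \<in> carrier_vec L \<Longrightarrow> block_vec L (stack_vec g) (src_pos a) = g a"
  using block_index_less src_pos src_node_src_pos by (auto simp: block_vec_def stack_vec_def vec_eq_iff)

lemma receiver_system_zero:
  assumes N: "N \<in> swirl_receiver_sets w" and g: "\<forall>a<w. g a \<in> carrier_vec L"
    and eqs: "\<forall>(j, b)\<in>N. vec_mat (g j) (transfer_own j b) + vec_mat (g (Suc j mod w)) (transfer_next j b) = 0\<^sub>v L"
    and "a < w"
  shows "g a = 0\<^sub>v L"
proof -
  have g_stack: "stack_vec g \<in> carrier_vec n" by (simp add: stack_vec_def)
  have "vec_mat (stack_vec g) (F (NV j, NW j b)) = 0\<^sub>v L" if "(j, b) \<in> N" for j b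
  proof -
    have j: "j < w" "Suc j mod w < w" using swirl_receiver_set_bound[OF N that] by auto
    then have "vec_mat (stack_vec g) (F (NV j, NW j b)) =
        vec_mat (g j) (transfer_own j b) + vec_mat (g (Suc j mod w)) (transfer_next j b)"
      using vec_mat_F_NV_NW[OF j(1) g_stack] block_vec_stack_vec g by simp
    then show ?thesis using eqs that by auto
  qed
  then have "stack_vec g = 0\<^sub>v n" using receiver_orthogonal_zero[OF N g_stack] by blast
  then have "block_vec L (stack_vec g) (src_pos a) = 0\<^sub>v L"
    using block_index_less src_pos[OF \<open>a < w\<close>] by (auto simp: block_vec_def vec_eq_iff)
  then show ?thesis using block_vec_stack_vec[of a g] g \<open>a < w\<close> by simp
qed

lemma receiver_routing_zero:
  assumes routing: "swirl_routing w t bs" and g: "\<forall>a<w. g a \<in> carrier_vec L"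
    and eqs: "\<And>a. a < w \<Longrightarrow> g (t a) \<noteq> 0\<^sub>v L \<or> g (Suc (t a) mod w) \<noteq> 0\<^sub>v L \<Longrightarrow>
      vec_mat (g (t a)) (transfer_own (t a) (bs a)) + vec_mat (g (Suc (t a) mod w)) (transfer_next (t a) (bs a)) = 0\<^sub>v L"
    and "a < w"
  shows "g a = 0\<^sub>v L"
proof (rule receiver_system_zero[OF swirl_receiver_setI[OF routing] g _ \<open>a < w\<close>], clarify)
  fix a assume a: "a < w"
  then have "t a < w" using routing unfolding swirl_routing_def by blast
  show "vec_mat (g (t a)) (transfer_own (t a) (bs a)) + vec_mat (g (Suc (t a) mod w)) (transfer_next (t a) (bs a)) = 0\<^sub>v L"
  proof (cases "g (t a) = 0\<^sub>v L \<and> g (Suc (t a) mod w) = 0\<^sub>v L")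
    case True
    then show ?thesis
      using vec_mat_zero[OF transfer_carrier(1)[OF \<open>t a < w\<close>]] vec_mat_zero[OF transfer_carrier(2)[OF \<open>t a < w\<close>]]
      by simp
  qed (use eqs[OF a] in blast)
qed

definition cyc_pred :: "nat \<Rightarrow> nat" where
  "cyc_pred a = (if a = 0 then w - 1 else a - 1)"

lemma cyc_pred_less: "a < w \<Longrightarrow> cyc_pred a < w"
  unfolding cyc_pred_def by auto

lemma Suc_cyc_pred: "a < w \<Longrightarrow> Suc (cyc_pred a) mod w = a"
  unfolding cyc_pred_def using w by auto

lemma cyc_pred_Suc: "a < w \<Longrightarrow> cyc_pred (Suc a mod w) = a"
  unfolding cyc_pred_def using w by (auto simp: Suc_mod_if)

lemma cyc_pred_neq: "a < w \<Longrightarrow> cyc_pred a \<noteq> a" "a < w \<Longrightarrow> cyc_pred (cyc_pred a) \<noteq> a"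
  "a < w \<Longrightarrow> Suc a mod w \<noteq> a" "a < w \<Longrightarrow> cyc_pred a \<noteq> Suc a mod w"
  "a < w \<Longrightarrow> cyc_pred (cyc_pred a) \<noteq> Suc a mod w"
  unfolding cyc_pred_def using w by (auto simp: Suc_mod_if)

text \<open>Turning the path through \<open>u\<^bsub>j-1\<^esub>\<close> to \<open>v\<^bsub>j-2\<^esub>\<close> makes \<open>(j, b)\<close> the only node of the
  receiver that sees the block of \<open>u\<^sub>j\<close>.\<close>
lemma transfer_own_zero:
  assumes j: "j < w" and x: "x \<in> carrier_vec L" and h: "vec_mat x (transfer_own j b) = 0\<^sub>v L"
  shows "x = 0\<^sub>v L"
proof -
  define p where "p = cyc_pred j"
  define t where "t a = (if a = p then cyc_pred p else a)" for a
  define bs where "bs a = (if a = j then b else a = p)" for a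
  define g where "g a = (if a = j then x else 0\<^sub>v L)" for a
  have p: "p < w" "p \<noteq> j" "cyc_pred p \<noteq> j" "cyc_pred p < w" "Suc p mod w = j" "Suc (cyc_pred p) mod w = p"
    using cyc_pred_less cyc_pred_neq Suc_cyc_pred j unfolding p_def by auto
  have routing: "swirl_routing w t bs"
    unfolding swirl_routing_def
  proof
    show "\<forall>a<w. t a < w \<and> (t a = a \<or> Suc (t a) mod w = a)"
      using w unfolding t_def p_def cyc_pred_def by (auto simp: Suc_mod_if)
    show "inj_on (\<lambda>a. (t a, bs a)) {..<w}"
      using w j unfolding inj_on_def t_def bs_def p_def cyc_pred_def by (auto simp: Suc_mod_if split: if_splits)
  qed
  have eqs: "vec_mat (g (t a)) (transfer_own (t a) (bs a)) +
      vec_mat (g (Suc (t a) mod w)) (transfer_next (t a) (bs a)) = 0\<^sub>v L"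
    if a: "a < w" and nz: "g (t a) \<noteq> 0\<^sub>v L \<or> g (Suc (t a) mod w) \<noteq> 0\<^sub>v L" for a
  proof -
    have "a \<noteq> p" using nz p by (auto simp: t_def g_def)
    then have "Suc a mod w \<noteq> j" using Suc_mod_inj[OF a p(1)] p(5) by auto
    with nz \<open>a \<noteq> p\<close> have "a = j" by (auto simp: t_def g_def split: if_splits)
    then show ?thesis using h vec_mat_zero[OF transfer_carrier(2)[OF j]] \<open>Suc a mod w \<noteq> j\<close> p(2)
      by (simp add: t_def g_def bs_def)
  qed
  have "g j = 0\<^sub>v L" by (rule receiver_routing_zero[OF routing _ eqs j]) (use x in \<open>simp add: g_def\<close>)
  then show ?thesis unfolding g_def by simp
qed

text \<open>Turning the paths through \<open>u\<^sub>j\<close> and \<open>u\<^bsub>j+1\<^esub>\<close> makes \<open>(j, b)\<close> the only node of the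
  receiver that sees the block of \<open>u\<^bsub>j+1\<^esub>\<close>.\<close>
lemma transfer_next_zero:
  assumes j: "j < w" and y: "y \<in> carrier_vec L" and h: "vec_mat y (transfer_next j b) = 0\<^sub>v L"
  shows "y = 0\<^sub>v L"
proof -
  define s where "s = Suc j mod w"
  define t where "t a = (if a = j \<or> a = s then cyc_pred a else a)" for a
  define bs where "bs a = (if a = s then b else a = j)" for a
  define g where "g a = (if a = s then y else 0\<^sub>v L)" for a
  have s: "s < w" "s \<noteq> j" "cyc_pred s = j" "cyc_pred j \<noteq> s" "cyc_pred j < w" "cyc_pred j \<noteq> j"
    "Suc (cyc_pred j) mod w = j" "Suc j mod w = s"
    using cyc_pred_less cyc_pred_neq cyc_pred_Suc Suc_cyc_pred j unfolding s_def by auto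
  have routing: "swirl_routing w t bs"
    unfolding swirl_routing_def
  proof
    show "\<forall>a<w. t a < w \<and> (t a = a \<or> Suc (t a) mod w = a)"
      using w j unfolding t_def s_def cyc_pred_def by (auto simp: Suc_mod_if)
    show "inj_on (\<lambda>a. (t a, bs a)) {..<w}"
      using w j unfolding inj_on_def t_def bs_def s_def cyc_pred_def by (auto simp: Suc_mod_if split: if_splits)
  qed
  have eqs: "vec_mat (g (t a)) (transfer_own (t a) (bs a)) +
      vec_mat (g (Suc (t a) mod w)) (transfer_next (t a) (bs a)) = 0\<^sub>v L"
    if a: "a < w" and nz: "g (t a) \<noteq> 0\<^sub>v L \<or> g (Suc (t a) mod w) \<noteq> 0\<^sub>v L" for a
  proof -
    have "t a \<noteq> s" using s by (auto simp: t_def)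
    with nz have "Suc (t a) mod w = s" by (auto simp: g_def split: if_splits)
    moreover have "t a < w" using routing a unfolding swirl_routing_def by blast
    ultimately have "t a = j" using Suc_mod_inj[OF _ j, of "t a"] s(8) by simp
    then have "a = s" using s by (auto simp: t_def split: if_splits)
    then show ?thesis using h vec_mat_zero[OF transfer_carrier(1)[OF j]] s by (simp add: t_def g_def bs_def)
  qed
  have "g s = 0\<^sub>v L" by (rule receiver_routing_zero[OF routing _ eqs s(1)]) (use y in \<open>simp add: g_def\<close>)
  then show ?thesis unfolding g_def by simp
qed

text \<open>Turning the paths through \<open>u\<^bsub>j-1\<^esub>\<close> and \<open>u\<^bsub>j+1\<^esub>\<close> makes the two out-edges of \<open>v\<^sub>j\<close>
  the only edges into the receiver that see the blocks of \<open>u\<^sub>j\<close> and \<open>u\<^bsub>j+1\<^esub>\<close>.\<close>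
lemma transfer_pair_zero:
  assumes j: "j < w" and x: "x \<in> carrier_vec L" and y: "y \<in> carrier_vec L"
    and h: "\<And>b. vec_mat x (transfer_own j b) + vec_mat y (transfer_next j b) = 0\<^sub>v L"
  shows "x = 0\<^sub>v L"
proof -
  define p where "p = cyc_pred j"
  define s where "s = Suc j mod w"
  define t where "t a = (if a = p \<or> a = s then cyc_pred a else a)" for a
  define bs where "bs a = (a = p \<or> a = s)" for a
  define g where "g a = (if a = j then x else if a = s then y else 0\<^sub>v L)" for a
  have ps: "p < w" "s < w" "cyc_pred p < w" "p \<noteq> j" "s \<noteq> j" "p \<noteq> s" "cyc_pred s = j"
    "cyc_pred p \<noteq> j" "cyc_pred p \<noteq> s" "cyc_pred p \<noteq> p"
    "Suc p mod w = j" "Suc (cyc_pred p) mod w = p" "Suc j mod w = s"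
    using cyc_pred_less cyc_pred_neq cyc_pred_Suc Suc_cyc_pred j unfolding p_def s_def by auto
  have routing: "swirl_routing w t bs"
    unfolding swirl_routing_def
  proof
    show "\<forall>a<w. t a < w \<and> (t a = a \<or> Suc (t a) mod w = a)"
      using ps j cyc_pred_less[OF ps(2)] unfolding t_def by auto
    show "inj_on (\<lambda>a. (t a, bs a)) {..<w}"
    proof (rule inj_onI)
      fix a a' assume "a \<in> {..<w}" "a' \<in> {..<w}" "(t a, bs a) = (t a', bs a')"
      then show "a = a'" using ps(6-8) unfolding t_def bs_def by (auto split: if_splits)
    qed
  qed
  have eqs: "vec_mat (g (t a)) (transfer_own (t a) (bs a)) +
      vec_mat (g (Suc (t a) mod w)) (transfer_next (t a) (bs a)) = 0\<^sub>v L"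
    if a: "a < w" and nz: "g (t a) \<noteq> 0\<^sub>v L \<or> g (Suc (t a) mod w) \<noteq> 0\<^sub>v L" for a
  proof -
    have "t a \<noteq> s" "t a \<noteq> p" using ps by (auto simp: t_def)
    moreover have "t a < w" using routing a unfolding swirl_routing_def by blast
    moreover have "Suc (t a) mod w = s \<Longrightarrow> t a = j"
      using Suc_mod_inj[OF \<open>t a < w\<close> j] ps(13) by simp
    ultimately have "Suc (t a) mod w \<noteq> j \<and> (Suc (t a) mod w = s \<longrightarrow> t a = j)"
      using Suc_mod_inj[OF _ ps(1), of "t a"] ps(11) by auto
    moreover have "x = j \<or> x = s" if "g x \<noteq> 0\<^sub>v L" for x using that by (auto simp: g_def split: if_splits)
    ultimately have "t a = j" using nz \<open>t a \<noteq> s\<close> by blast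
    then show ?thesis using h ps by (simp add: g_def)
  qed
  have "g j = 0\<^sub>v L" by (rule receiver_routing_zero[OF routing _ eqs j]) (use x y in \<open>simp add: g_def\<close>)
  then show ?thesis unfolding g_def by simp
qed

lemma walk_equations_zero:
  assumes xs: "\<forall>a<w. xs a \<in> carrier_vec L"
    and eqs: "\<forall>j<w. vec_mat (xs j) (transfer_own j (bs j)) + vec_mat (xs (Suc j mod w)) (transfer_next j (bs j)) = 0\<^sub>v L"
    and "a < w"
  shows "xs a = 0\<^sub>v L"
  by (rule receiver_routing_zero[of "\<lambda>a. a" bs]) (use assms in \<open>auto simp: swirl_routing_def inj_on_def\<close>)

lemma transfer_next_left_inverse:
  assumes j: "j < w"
  shows "\<exists>D. D \<in> carrier_mat L L \<and> D * transfer_next j b = 1\<^sub>m L"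
proof -
  have C: "transfer_next j b \<in> carrier_mat L L" using transfer_carrier[OF j] by blast
  have "det (transpose_mat (transfer_next j b)) \<noteq> 0"
  proof
    assume "det (transpose_mat (transfer_next j b)) = 0"
    then obtain v where "v \<in> carrier_vec L" "v \<noteq> 0\<^sub>v L" "vec_mat v (transfer_next j b) = 0\<^sub>v L"
      using det_0_iff_vec_prod_zero_field[of "transpose_mat (transfer_next j b)" L] C
      unfolding vec_mat_def by auto
    then show False using transfer_next_zero[OF j] by blast
  qed
  then have "det (transfer_next j b) \<noteq> 0" using det_transpose[OF C] by simp
  from det_non_zero_imp_unit[OF C this, of "()"]
  show ?thesis unfolding Units_def ring_mat_def by auto
qed

text \<open>Over a field of characteristic 2 the receiver equation at the layer-4 node \<open>(j, b)\<close> says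
  that the block at \<open>u\<^bsub>j+1\<^esub>\<close> is \<open>transfer_step j b\<close> applied to the block at \<open>u\<^sub>j\<close>.\<close>
definition transfer_step :: "nat \<Rightarrow> bool \<Rightarrow> 'a vec \<Rightarrow> 'a vec" where
  "transfer_step j b x =
     vec_mat x (transfer_own j b * (SOME D. D \<in> carrier_mat L L \<and> D * transfer_next j b = 1\<^sub>m L))"

lemma transfer_step:
  assumes j: "j < w" and x: "x \<in> carrier_vec L"
  shows "transfer_step j b x \<in> carrier_vec L"
    and "vec_mat (transfer_step j b x) (transfer_next j b) = vec_mat x (transfer_own j b)"
proof -
  define D where "D = (SOME D. D \<in> carrier_mat L L \<and> D * transfer_next j b = 1\<^sub>m L)"
  have D: "D \<in> carrier_mat L L" "D * transfer_next j b = 1\<^sub>m L"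
    unfolding D_def using someI_ex[OF transfer_next_left_inverse[OF j]] by auto
  have A: "transfer_own j b \<in> carrier_mat L L" and C: "transfer_next j b \<in> carrier_mat L L"
    using transfer_carrier[OF j] by auto
  show "transfer_step j b x \<in> carrier_vec L"
    unfolding transfer_step_def D_def[symmetric] using A D by (meson mult_carrier_mat vec_mat_carrier)
  have "vec_mat (transfer_step j b x) (transfer_next j b) = vec_mat x (transfer_own j b * D * transfer_next j b)"
    unfolding transfer_step_def D_def[symmetric] using vec_mat_mult[OF mult_carrier_mat[OF A D(1)] C x] by simp
  also have "transfer_own j b * D * transfer_next j b = transfer_own j b"
    using assoc_mult_mat[OF A D(1) C] D(2) A by simp
  finally show "vec_mat (transfer_step j b x) (transfer_next j b) = vec_mat x (transfer_own j b)" .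
qed

lemma transfer_step_separated:
  assumes char2: "(1::'a) + 1 = 0" and j: "j < w"
  shows "separated_pair L (transfer_step j True) (transfer_step j False)"
proof -
  have A: "transfer_own j b \<in> carrier_mat L L" and C: "transfer_next j b \<in> carrier_mat L L" for b
    using transfer_carrier[OF j] by auto
  have add_self: "u + u = 0\<^sub>v L" if "u \<in> carrier_vec L" for u :: "'a vec"
    using that char2 by (intro eq_vecI) (auto simp flip: distrib_left[of _ 1 1, simplified])
  have "transfer_step j b (x + y) = transfer_step j b x + transfer_step j b y"
    if "x \<in> carrier_vec L" "y \<in> carrier_vec L" for b x y
    unfolding transfer_step_def using vec_mat_add_vec[OF mult_carrier_mat[OF A]] that
      someI_ex[OF transfer_next_left_inverse[OF j]] by blast
  moreover have "transfer_step j b x \<noteq> 0\<^sub>v L" if "x \<in> nonzero_vecs L" for b x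
    using transfer_step(2)[OF j, of x b] transfer_own_zero[OF j, of x b] vec_mat_zero[OF C] that
    unfolding nonzero_vecs_def by auto
  moreover have "transfer_step j True x \<noteq> transfer_step j False x" if "x \<in> nonzero_vecs L" for x
  proof
    assume eq: "transfer_step j True x = transfer_step j False x"
    let ?y = "transfer_step j True x"
    have x: "x \<in> carrier_vec L" "x \<noteq> 0\<^sub>v L" using that unfolding nonzero_vecs_def by auto
    have "vec_mat x (transfer_own j b) + vec_mat ?y (transfer_next j b) = 0\<^sub>v L" for b
      using transfer_step(2)[OF j x(1), of b] eq add_self[OF vec_mat_carrier[OF A[of b]]]
      by (cases b) auto
    then show False using transfer_pair_zero[OF j x(1) transfer_step(1)[OF j x(1)]] x(2) by blast
  qed
  ultimately show ?thesis unfolding separated_pair_def using transfer_step(1)[OF j] by blast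
qed

end

lemma swirl_vector_solution_GF2_impossible:
  fixes K :: "snode \<times> snode \<Rightarrow> snode \<times> snode \<Rightarrow> 'a::{field,finite} mat"
  assumes "swirl_vector_solution w L K F srcs"
    and card2: "CARD('a) = 2" and L: "1 \<le> L" "L \<le> 3" and w6: "6 \<le> w"
  shows False
proof -
  interpret swirl_vector_solution w L K F srcs by fact
  have "\<forall>j<w. separated_pair L (transfer_step j True) (transfer_step j False)"
    using transfer_step_separated card2_char2[OF card2] by blast
  then obtain xs bs where xs: "xs 0 \<in> nonzero_vecs L" "\<forall>j<w. xs (Suc j) = transfer_step j (bs j) (xs j)"
    "xs w = xs 0"
    using closed_walk_exists[OF card2 L w6] by blast
  have xs_car: "xs j \<in> carrier_vec L" if "j \<le> w" for j
    using that
  proof (induction j)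
    case (Suc j)
    then show ?case using xs(2) transfer_step(1) by simp
  qed (use xs(1) in \<open>simp add: nonzero_vecs_def\<close>)
  have "\<forall>j<w. vec_mat (xs j) (transfer_own j (bs j)) + vec_mat (xs (Suc j mod w)) (transfer_next j (bs j)) = 0\<^sub>v L"
  proof (intro allI impI)
    fix j assume j: "j < w"
    have "xs (Suc j mod w) = xs (Suc j)" using j xs(3) by (simp add: Suc_mod_if)
    also have "\<dots> = transfer_step j (bs j) (xs j)" using j xs(2) by simp
    finally have "xs (Suc j mod w) = transfer_step j (bs j) (xs j)" .
    then show "vec_mat (xs j) (transfer_own j (bs j)) + vec_mat (xs (Suc j mod w)) (transfer_next j (bs j)) = 0\<^sub>v L"
      using transfer_step(2)[OF j xs_car, of j "bs j"] j
        vec_add_self[OF card2 vec_mat_carrier[OF transfer_carrier(1)[OF j]]] by simp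
  qed
  then have "xs 0 = 0\<^sub>v L" using walk_equations_zero[of xs bs 0] xs_car w by simp
  then show False using xs(1) unfolding nonzero_vecs_def by simp
qed

lemma swirl_vl_solvableE:
  assumes "swirl_vl_solvable TYPE('a::field) w L" and "4 \<le> w"
  obtains K :: "snode \<times> snode \<Rightarrow> snode \<times> snode \<Rightarrow> 'a::field mat" and F srcs
  where "swirl_vector_solution w L K F srcs"
proof -
  obtain K :: "snode \<times> snode \<Rightarrow> snode \<times> snode \<Rightarrow> 'a mat" and F
    where "is_vector_linear_solution (swirl_edges w) fst snd Src (swirl_receivers w) L K F"
    using assms(1) unfolding swirl_vl_solvable_def vector_linear_solvable_def by blast
  note sol = this[unfolded is_vector_linear_solution_def Let_def card_Out_edges_Src]
  then obtain srcs where srcs: "distinct srcs" "set srcs = Out_edges (swirl_edges w) fst Src"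
    "block_concat (w * L) F srcs = 1\<^sub>m (w * L)"
    by blast
  have "swirl_vector_solution w L K F srcs"
    by unfold_locales (use assms(2) sol srcs in blast)+
  then show thesis by (rule that)
qed

lemma of_nat_nonzero_prime_card:
  assumes "CARD('a::{field,finite}) = p" "prime p" "\<not> p dvd k"
  shows "(of_nat k :: 'a) \<noteq> 0"
proof -
  have "CHAR('a) dvd p" using CHAR_dvd_CARD[where 'a = 'a] assms(1) by simp
  then have "CHAR('a) = p" using assms(2) CHAR_not_1'[where 'a = 'a] by (auto simp: prime_nat_iff)
  then show ?thesis using of_nat_eq_0_iff_char_dvd[of k, where 'a = 'a] assms(3) by simp
qed

theorem proposition13:
  fixes \<omega> :: nat
  assumes "\<omega> \<ge> 6"
    and "card (UNIV :: 'a::{field,finite} set) = 5"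
    and "card (UNIV :: 'b::{field,finite} set) = 7"
    and "card (UNIV :: 'c::{field,finite} set) = 2"
  shows "swirl_vl_solvable TYPE('a) \<omega> 1 \<and> swirl_vl_solvable TYPE('b) \<omega> 1 \<and>
         (\<forall>L\<in>{1, 2, 3}. \<not> swirl_vl_solvable TYPE('c) \<omega> L)"
proof (intro conjI ballI notI)
  have "prime (5::nat)" "prime (7::nat)" by (simp_all add: prime_nat_iff' atLeastLessThan_nat_numeral)
  then have "(2::'a) \<noteq> 0" "(3::'a) \<noteq> 0" "(2::'b) \<noteq> 0" "(3::'b) \<noteq> 0"
    using of_nat_nonzero_prime_card[OF assms(2), of 2] of_nat_nonzero_prime_card[OF assms(2), of 3]
      of_nat_nonzero_prime_card[OF assms(3), of 2] of_nat_nonzero_prime_card[OF assms(3), of 3] by auto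
  moreover have "3 \<le> \<omega>" using assms(1) by simp
  ultimately show "swirl_vl_solvable TYPE('a) \<omega> 1" "swirl_vl_solvable TYPE('b) \<omega> 1"
    using swirl_scalar_solvable by blast+
next
  fix L :: nat assume L: "L \<in> {1, 2, 3}" and sol: "swirl_vl_solvable TYPE('c) \<omega> L"
  have "4 \<le> \<omega>" using assms(1) by simp
  with sol obtain K :: "snode \<times> snode \<Rightarrow> snode \<times> snode \<Rightarrow> 'c mat" and F srcs
    where "swirl_vector_solution \<omega> L K F srcs"
    by (rule swirl_vl_solvableE)
  moreover have "1 \<le> L" "L \<le> 3" using L by auto
  ultimately show False using swirl_vector_solution_GF2_impossible assms(1,4) by blast
qed

end
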